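(* Let $p$ be a prime, $e,r\ge2$ and $c,d\ge1$ integers with $d\mid e-1$, and let $R$ be a ring of characteristic $p^{r+1}$. Let $\mathbb S=R[x][y;\alpha]$ with $\alpha$ the $R$-ring automorphism of $R[x]$ given by $\alpha(x)=x+px^e$ (so $yx=(x+px^e)y$). Define $\Sigma_m=\frac{e^m-1}{e-1}$ for $m\in\mathbb N$, let $\mu\ge1$ be the integer with $c\Sigma_{\mu-1}\le r<c\Sigma_\mu$, and set $\overline\Sigma_m=c\Sigma_m$ for $0\le m\le\mu$ and $\overline\Sigma_{\mu+s}=c(s+\Sigma_\mu)+sr(e-1)$ for $s\in\mathbb N$. Let $$\widetilde{\mathcal T}=\{x^ny^m: m,n\in\mathbb N,\ n-cm\in d\mathbb Z\},\qquad \mathcal T=\{x^ny^m: m,n\in\mathbb N,\ n-cm\in d\mathbb N,\ n\le\overline\Sigma_m\},$$ and let $A=\bigoplus_{\tau\in\mathcal T}R\tau$ and $\widetilde A=\bigoplus_{\tau\in\widetilde{\mathcal T}}R\tau$. Then $A$ and $\widetilde A$ are subrings of $\mathbb S$; $A$ is a strongly nicely essential subring of $\widetilde A$; and $\widetilde A$ is a special subextension of $\mathbb S$ regarded as the univariate Ore extension $R[x][y;\alpha]$ over $R[x]$ (with, for each $m$, attached data $\lambda_m=x^{cm}y^m$, $B_m=R[x^d]$ and $\alpha_{(m)}$ the restriction of $\alpha^m$ to $R[x^d]$).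
   Context: $\mathbb S$ is free as a left $R$-module on $\{x^ny^m:m,n\in\mathbb N\}$. A subring $A$ of a ring $B$ is nicely essential if for every finite set $E\subseteq B$ of non-zero elements there is $a\in A$ with $0\ne ax\in A$ for all $x\in E$; strongly nicely essential if moreover for every $z\in B$ there is $c\in A$ with $\{a\in A:ac=0\}=0$ and $cz\in A$. For $S=R[x]$ (free over $R$) and the Ore extension $S[y;\alpha]$: for a subring $A'\supseteq R$, $\operatorname{Deg}_y(A')=\{\deg_yf:0\ne f\in A'\}$, $d_{A'}=\gcd(\operatorname{Deg}_y(A')\setminus\{0\})$ if $A'\not\subseteq S$, else $0$; $A'$ is a special subextension if $A'=\sum_m(A'\cap Sy^m)$, $\operatorname{Deg}_y(A')=d_{A'}\mathbb N$, and for each $0\ne m\in\operatorname{Deg}_y(A')$ there exist $\lambda_m=\upsilon_my^m\in A'$ with $\upsilon_m$ regular in $S$, a subring $B_m$ with $R\subseteq B_m\subseteq A'\cap S$ and an automorphism $\alpha_{(m)}$ of $B_m$ such that $\deg_y(\lambda_mq-\alpha_{(m)}(q)\lambda_m)<m$ for all $q\in B_m$, and for every $q\in S$ with $qy^m\in A'$ some $u\in B_m$ regular in $S$ with $uqy^m\in B_m\lambda_m$. *)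

theory Defs
  imports Main "HOL-Computational_Algebra.Primes"
begin

text \<open>The Ore extension S = R[x][y;alpha] is presented abstractly: an ambient unital
ring of type 'a, a unital subring R, and elements x, y such that R commutes with x and y,
y x = (x + p x^e) y, and S is free as a left R-module on the monomials x^n y^m.\<close>

definition is_subring :: "'a::ring_1 set \<Rightarrow> bool" where
  "is_subring A \<longleftrightarrow> 0 \<in> A \<and> 1 \<in> A \<and> (\<forall>a\<in>A. \<forall>b\<in>A. a + b \<in> A \<and> a - b \<in> A \<and> a * b \<in> A)"

definition rep :: "'a::ring_1 set \<Rightarrow> 'a \<Rightarrow> 'a \<Rightarrow> (nat \<Rightarrow> nat \<Rightarrow> 'a) \<Rightarrow> 'a \<Rightarrow> bool" where
  "rep R x y c s \<longleftrightarrow> (\<forall>n m. c n m \<in> R) \<and> finite {(n, m). c n m \<noteq> 0} \<and>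
     s = (\<Sum>(n, m)\<in>{(n, m). c n m \<noteq> 0}. c n m * x ^ n * y ^ m)"

definition ore_setup :: "'a::ring_1 set \<Rightarrow> 'a \<Rightarrow> 'a \<Rightarrow> nat \<Rightarrow> nat \<Rightarrow> bool" where
  "ore_setup R x y p e \<longleftrightarrow> is_subring R \<and> (\<forall>a\<in>R. a * x = x * a \<and> a * y = y * a) \<and>
     y * x = (x + of_nat p * x ^ e) * y \<and> (\<forall>s. \<exists>!c. rep R x y c s)"

definition coef :: "'a::ring_1 set \<Rightarrow> 'a \<Rightarrow> 'a \<Rightarrow> 'a \<Rightarrow> nat \<Rightarrow> nat \<Rightarrow> 'a" where
  "coef R x y s = (THE c. rep R x y c s)"

definition Rspan :: "'a::ring_1 set \<Rightarrow> 'a \<Rightarrow> 'a \<Rightarrow> (nat \<times> nat) set \<Rightarrow> 'a set" where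
  "Rspan R x y I = {s. \<exists>c. rep R x y c s \<and> (\<forall>n m. c n m \<noteq> 0 \<longrightarrow> (n, m) \<in> I)}"

definition Rx :: "'a::ring_1 set \<Rightarrow> 'a \<Rightarrow> 'a \<Rightarrow> 'a set" where
  "Rx R x y = Rspan R x y {(n, m). m = 0}"

definition alpha :: "'a::ring_1 set \<Rightarrow> 'a \<Rightarrow> 'a \<Rightarrow> nat \<Rightarrow> nat \<Rightarrow> 'a \<Rightarrow> 'a" where
  "alpha R x y p e s = (\<Sum>n\<in>{n. coef R x y s n 0 \<noteq> 0}. coef R x y s n 0 * (x + of_nat p * x ^ e) ^ n)"

definition nicely_essential :: "'a::ring_1 set \<Rightarrow> 'a set \<Rightarrow> bool" where
  "nicely_essential A B \<longleftrightarrow>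
     (\<forall>E. finite E \<longrightarrow> E \<subseteq> B - {0} \<longrightarrow> (\<exists>a\<in>A. \<forall>z\<in>E. a * z \<noteq> 0 \<and> a * z \<in> A))"

definition strongly_nicely_essential :: "'a::ring_1 set \<Rightarrow> 'a set \<Rightarrow> bool" where
  "strongly_nicely_essential A B \<longleftrightarrow> nicely_essential A B \<and>
     (\<forall>z\<in>B. \<exists>c\<in>A. {a\<in>A. a * c = 0} = {0} \<and> c * z \<in> A)"

text \<open>y-degree (for nonzero elements): largest m with a nonzero coefficient of some x^n y^m\<close>
definition deg_y :: "'a::ring_1 set \<Rightarrow> 'a \<Rightarrow> 'a \<Rightarrow> 'a \<Rightarrow> nat" where
  "deg_y R x y f = Max {m. \<exists>n. coef R x y f n m \<noteq> 0}"

definition Deg_y :: "'a::ring_1 set \<Rightarrow> 'a \<Rightarrow> 'a \<Rightarrow> 'a set \<Rightarrow> nat set" where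
  "Deg_y R x y A' = {deg_y R x y f | f. f \<in> A' \<and> f \<noteq> 0}"

definition d_of :: "'a::ring_1 set \<Rightarrow> 'a \<Rightarrow> 'a \<Rightarrow> 'a set \<Rightarrow> nat" where
  "d_of R x y A' = (if A' \<subseteq> Rx R x y then 0 else Gcd (Deg_y R x y A' - {0}))"

definition regular_in :: "'a::ring_1 set \<Rightarrow> 'a \<Rightarrow> bool" where
  "regular_in S u \<longleftrightarrow> u \<in> S \<and> (\<forall>s\<in>S. (u * s = 0 \<longrightarrow> s = 0) \<and> (s * u = 0 \<longrightarrow> s = 0))"

definition ring_aut :: "'a::ring_1 set \<Rightarrow> ('a \<Rightarrow> 'a) \<Rightarrow> bool" where
  "ring_aut B f \<longleftrightarrow> bij_betw f B B \<and> f 1 = 1 \<and>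
     (\<forall>a\<in>B. \<forall>b\<in>B. f (a + b) = f a + f b \<and> f (a * b) = f a * f b)"

text \<open>special subextension with explicitly given data: lambda_m = ups m * y^m, B m, al m\<close>
definition special_with :: "'a::ring_1 set \<Rightarrow> 'a \<Rightarrow> 'a \<Rightarrow> 'a set \<Rightarrow>
    (nat \<Rightarrow> 'a) \<Rightarrow> (nat \<Rightarrow> 'a set) \<Rightarrow> (nat \<Rightarrow> 'a \<Rightarrow> 'a) \<Rightarrow> bool" where
  "special_with R x y A' ups B al \<longleftrightarrow>
     is_subring A' \<and> R \<subseteq> A' \<and>
     A' = {\<Sum>m\<in>F. g m | F g. finite F \<and> (\<forall>m\<in>F. g m \<in> A' \<and> (\<exists>q\<in>Rx R x y. g m = q * y ^ m))} \<and>
     Deg_y R x y A' = {d_of R x y A' * k | k. True} \<and>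
     (\<forall>m\<in>Deg_y R x y A'. m \<noteq> 0 \<longrightarrow>
        ups m * y ^ m \<in> A' \<and> regular_in (Rx R x y) (ups m) \<and>
        is_subring (B m) \<and> R \<subseteq> B m \<and> B m \<subseteq> A' \<inter> Rx R x y \<and> ring_aut (B m) (al m) \<and>
        (\<forall>q\<in>B m. let f = ups m * y ^ m * q - al m q * (ups m * y ^ m)
                  in f = 0 \<or> deg_y R x y f < m) \<and>
        (\<forall>q\<in>Rx R x y. q * y ^ m \<in> A' \<longrightarrow>
           (\<exists>u\<in>B m. regular_in (Rx R x y) u \<and>
              u * q * y ^ m \<in> {b * (ups m * y ^ m) | b. b \<in> B m})))"

definition special_subext :: "'a::ring_1 set \<Rightarrow> 'a \<Rightarrow> 'a \<Rightarrow> 'a set \<Rightarrow> bool" where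
  "special_subext R x y A' \<longleftrightarrow> (\<exists>ups B al. special_with R x y A' ups B al)"

definition Sig :: "nat \<Rightarrow> nat \<Rightarrow> nat" where
  "Sig e m = (\<Sum>i<m. e ^ i)"   \<comment> \<open>= (e^m - 1)/(e - 1)\<close>

definition mu :: "nat \<Rightarrow> nat \<Rightarrow> nat \<Rightarrow> nat" where
  "mu c e r = (THE \<mu>. 1 \<le> \<mu> \<and> c * Sig e (\<mu> - 1) \<le> r \<and> r < c * Sig e \<mu>)"

definition Sigbar :: "nat \<Rightarrow> nat \<Rightarrow> nat \<Rightarrow> nat \<Rightarrow> nat" where
  "Sigbar c e r m = (let \<mu> = mu c e r in
     if m \<le> \<mu> then c * Sig e m
     else c * ((m - \<mu>) + Sig e \<mu>) + (m - \<mu>) * r * (e - 1))"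

definition Tset :: "nat \<Rightarrow> nat \<Rightarrow> nat \<Rightarrow> nat \<Rightarrow> (nat \<times> nat) set" where
  "Tset c d e r = {(n, m). c * m \<le> n \<and> d dvd (n - c * m) \<and> n \<le> Sigbar c e r m}"

definition Ttilde :: "nat \<Rightarrow> nat \<Rightarrow> (nat \<times> nat) set" where
  "Ttilde c d = {(n, m). int d dvd (int n - int c * int m)}"

end

theory Submission
  imports Defs
begin

text \<open>
  Since \<open>y x = (x + p x\<^sup>e) y\<close>, commuting \<open>y\<^sup>b\<close> past
  \<open>x\<^sup>n\<close> gives \<open>y\<^sup>b x\<^sup>n = w y\<^sup>b\<close> with \<open>w\<close> an integral combination of the \<open>p\<^sup>j x\<^bsup>n + j(e - 1)\<^esup>\<close>
  for \<open>j \<le> n \<Sigma>\<^sub>b\<close>, and since \<open>p\<^bsup>r+1\<^esup> = 0\<close> only the terms with \<open>j \<le> r\<close> survive. So the span of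
  a set of monomials is a subring once the set is closed under these degree shifts: for \<open>Ttilde\<close>
  this is a congruence modulo \<open>d\<close>, for \<open>Tset\<close> an inequality between the bounds \<open>\<Sigma>\<close>-bar, which grow
  like \<open>c \<Sigma>\<^sub>m\<close> up to \<open>\<mu>\<close> and then linearly with slope \<open>c + r (e - 1)\<close>. That slope also lets one
  monomial \<open>x\<^sup>N y\<^sup>k\<close> of \<open>A\<close>, with \<open>k\<close> large, multiply finitely many given elements of \<open>A\<close>-tilde
  into \<open>A\<close>; since \<open>x\<close> and \<open>y\<close> are regular, this monomial annihilates nothing, and \<open>A\<close> is strongly
  nicely essential. Finally \<open>\<alpha>\<close> is the identity modulo \<open>p\<close>, so \<open>\<alpha> - id\<close> is nilpotent on \<open>R[x\<^sup>d]\<close>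
  and \<open>\<alpha>\<close> restricts to an automorphism there; with \<open>x\<^bsup>cm\<^esup> y\<^sup>m q = \<alpha>\<^sup>m(q) x\<^bsup>cm\<^esup> y\<^sup>m\<close> this makes
  \<open>A\<close>-tilde a special subextension.
\<close>

section \<open>The bounds \<Sigma> and \<Sigma>-bar\<close>

lemma Sig_0 [simp]: "Sig e 0 = 0"
  by (simp add: Sig_def)

lemma Sig_Suc: "Sig e (Suc m) = Sig e m + e ^ m"
  by (simp add: Sig_def)

lemma Sig_Suc_left: "Sig e (Suc m) = 1 + e * Sig e m"
  unfolding Sig_def by (subst sum.lessThan_Suc_shift) (simp add: sum_distrib_left)

lemma Sig_add: "Sig e (a + b) = Sig e a + e ^ a * Sig e b"
  by (induction b) (auto simp: Sig_Suc algebra_simps power_add)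

lemma power_eq_Sig: "e \<ge> 1 \<Longrightarrow> e ^ m = 1 + (e - 1) * Sig e m"
proof (induction m)
  case (Suc m)
  have "e ^ Suc m = e ^ m + (e - 1) * e ^ m"
    using Suc.prems by (cases e) simp_all
  also have "\<dots> = 1 + (e - 1) * Sig e (Suc m)"
    using Suc by (simp add: Sig_Suc distrib_left)
  finally show ?case .
qed simp

lemma Sig_mono: "a \<le> b \<Longrightarrow> Sig e a \<le> Sig e b"
  using Sig_add[of e a "b - a"] by simp

lemma le_Sig: "e \<ge> 1 \<Longrightarrow> m \<le> Sig e m"
proof (induction m)
  case (Suc m)
  have "1 \<le> e ^ m"
    using Suc.prems by simp
  then show ?case
    using Suc unfolding Sig_Suc by linarith
qed simp

context
  fixes c e r :: nat
  assumes c_ge_1: "c \<ge> 1" and e_ge_2: "e \<ge> 2"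
begin

lemma mu_bounds: "1 \<le> mu c e r" "c * Sig e (mu c e r - 1) \<le> r" "r < c * Sig e (mu c e r)"
proof -
  define P where "P k \<longleftrightarrow> r < c * Sig e k" for k
  have "P (Suc r)"
    using le_Sig[of e "Suc r"] c_ge_1 e_ge_2 unfolding P_def
    by (metis le_trans less_eq_Suc_le mult_le_mono1 mult_1 one_le_numeral)
  define m where "m = (LEAST k. P k)"
  have "P m"
    unfolding m_def by (rule LeastI) fact
  then have "1 \<le> m"
    by (cases m) (auto simp: P_def Sig_def)
  have "\<not> P (m - 1)"
    unfolding m_def using \<open>1 \<le> m\<close> not_less_Least[of "m - 1" P] m_def by simp
  then have m: "1 \<le> m \<and> c * Sig e (m - 1) \<le> r \<and> r < c * Sig e m"
    using \<open>P m\<close> \<open>1 \<le> m\<close> by (auto simp: P_def)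
  have uniq: "k = m" if k: "1 \<le> k \<and> c * Sig e (k - 1) \<le> r \<and> r < c * Sig e k" for k
  proof (rule ccontr)
    assume "k \<noteq> m"
    then have "k \<le> m - 1 \<or> m \<le> k - 1"
      using k m by linarith
    then have "Sig e k \<le> Sig e (m - 1) \<or> Sig e m \<le> Sig e (k - 1)"
      using Sig_mono by blast
    then show False
      using k m by (meson le_trans mult_le_mono2 not_le)
  qed
  then have "mu c e r = m"
    unfolding mu_def using m uniq by (intro the_equality) blast+
  then show "1 \<le> mu c e r" "c * Sig e (mu c e r - 1) \<le> r" "r < c * Sig e (mu c e r)"
    using m by simp_all
qed

lemma Sigbar_le_mu: "m \<le> mu c e r \<Longrightarrow> Sigbar c e r m = c * Sig e m"
  by (simp add: Sigbar_def Let_def)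

lemma Sigbar_ge_mu:
  "mu c e r \<le> m \<Longrightarrow> Sigbar c e r m = c * Sig e (mu c e r) + (m - mu c e r) * (c + r * (e - 1))"
proof -
  assume "mu c e r \<le> m"
  then obtain t where "m = mu c e r + t"
    using le_Suc_ex by blast
  then show ?thesis
    by (cases t) (simp_all add: Sigbar_def Let_def distrib_left distrib_right ac_simps)
qed

lemma Sigbar_0: "Sigbar c e r 0 = 0"
  by (simp add: Sigbar_le_mu)

text \<open>Below \<open>\<mu>\<close> the increments \<open>c e\<^sup>k\<close> of \<open>c \<Sigma>\<^sub>m\<close> stay below the slope \<open>c + r (e - 1)\<close> of the linear part.\<close>

lemma Sigbar_below_linear:
  assumes "1 \<le> s"
  shows "Sigbar c e r s + r * (e - 1) \<le> s * (c + r * (e - 1))"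
proof -
  let ?\<mu> = "mu c e r" and ?L = "c + r * (e - 1)"
  have increment: "c * e ^ k \<le> ?L" if "k < ?\<mu>" for k
  proof -
    have "Sig e k \<le> Sig e (?\<mu> - 1)"
      using that by (intro Sig_mono) simp
    then have "c * Sig e k \<le> r"
      using mu_bounds(2) by (meson le_trans mult_le_mono2)
    moreover have "c * e ^ k = c + (e - 1) * (c * Sig e k)"
      using power_eq_Sig[of e k] e_ge_2 by (simp add: algebra_simps)
    ultimately show ?thesis
      by (simp add: mult.commute[of r])
  qed
  have below: "c * Sig e s + r * (e - 1) \<le> s * ?L" if "1 \<le> s" "s \<le> ?\<mu>" for s
    using that
  proof (induction s rule: dec_induct)
    case (step s)
    have "c * Sig e (Suc s) = c * Sig e s + c * e ^ s"
      by (simp add: Sig_Suc distrib_left)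
    moreover have "Suc s * ?L = ?L + s * ?L"
      by (simp only: mult_Suc)
    ultimately show ?case
      using step increment[of s] by linarith
  qed (simp add: Sig_Suc)
  show ?thesis
  proof (cases "s \<le> ?\<mu>")
    case True
    then show ?thesis using below assms by (simp add: Sigbar_le_mu)
  next
    case False
    then have "s * ?L = ?\<mu> * ?L + (s - ?\<mu>) * ?L"
      by (simp add: add_mult_distrib[symmetric])
    then show ?thesis
      using below[of ?\<mu>] mu_bounds(1) False by (simp add: Sigbar_ge_mu)
  qed
qed

lemma Sigbar_superadditive:
  assumes "1 \<le> a" "1 \<le> b" "mu c e r < a + b"
  shows "Sigbar c e r a + Sigbar c e r b + r * (e - 1) \<le> Sigbar c e r (a + b)"
proof -
  let ?\<mu> = "mu c e r" and ?L = "c + r * (e - 1)"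
  have linear: "Sigbar c e r (a + b) = Sigbar c e r a + b * ?L" if "?\<mu> \<le> a" for a b
  proof -
    have "(a + b - ?\<mu>) * ?L = (a - ?\<mu>) * ?L + b * ?L"
      using that by (simp add: add_mult_distrib[symmetric])
    then show ?thesis
      using that by (simp add: Sigbar_ge_mu)
  qed
  consider "?\<mu> \<le> a" | "?\<mu> \<le> b" | "a < ?\<mu>" "b < ?\<mu>"
    by linarith
  then show ?thesis
  proof cases
    case 1
    then show ?thesis using linear[of a b] Sigbar_below_linear[of b] assms by simp
  next
    case 2
    then show ?thesis using linear[of b a] Sigbar_below_linear[of a] assms by (simp add: add.commute)
  next
    case 3
    have "Sig e a + Sig e b \<le> 2 * Sig e (?\<mu> - 1)"
      using 3 Sig_mono[of a "?\<mu> - 1" e] Sig_mono[of b "?\<mu> - 1" e] by linarith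
    also have "\<dots> \<le> e * Sig e (?\<mu> - 1)"
      using e_ge_2 by (rule mult_le_mono1)
    also have "\<dots> \<le> Sig e ?\<mu>"
      using Sig_Suc_left[of e "?\<mu> - 1"] mu_bounds(1) by simp
    finally have "c * Sig e a + c * Sig e b \<le> c * Sig e ?\<mu>"
      by (metis add_mult_distrib2 mult_le_mono2)
    moreover have "1 \<le> a + b - ?\<mu>"
      using assms(3) by simp
    then have "?L \<le> (a + b - ?\<mu>) * ?L"
      using mult_le_mono1 by fastforce
    moreover have "Sigbar c e r (a + b) = c * Sig e ?\<mu> + (a + b - ?\<mu>) * ?L"
      using assms(3) by (simp add: Sigbar_ge_mu)
    moreover have "Sigbar c e r a = c * Sig e a" "Sigbar c e r b = c * Sig e b"
      using 3 by (simp_all add: Sigbar_le_mu)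
    ultimately show ?thesis
      by linarith
  qed
qed

text \<open>The degree bound behind the closure of \<open>Tset\<close> under multiplication: commuting \<open>y\<^sup>b\<close>
  past \<open>x\<^sup>n\<close> creates the terms \<open>p\<^sup>j x\<^bsup>n + j(e - 1)\<^esup>\<close> with \<open>j \<le> n \<Sigma>\<^sub>b\<close>, and those with \<open>j > r\<close> vanish.\<close>

lemma Sigbar_product_bound:
  assumes "a \<le> Sigbar c e r b" "n \<le> Sigbar c e r m" "j \<le> n * Sig e b" "j \<le> r"
  shows "a + n + j * (e - 1) \<le> Sigbar c e r (b + m)"
proof -
  consider "b = 0" | "m = 0" | "b + m \<le> mu c e r" | "1 \<le> b" "1 \<le> m" "mu c e r < b + m"
    by linarith
  then show ?thesis
  proof cases
    case 3
    have "n * e ^ b = n + n * Sig e b * (e - 1)"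
      using power_eq_Sig[of e b] e_ge_2 by (simp add: algebra_simps)
    then have "n + j * (e - 1) \<le> n * e ^ b"
      using mult_le_mono1[OF assms(3), of "e - 1"] by linarith
    also have "\<dots> \<le> c * Sig e m * e ^ b"
      using assms(2) 3 by (simp add: Sigbar_le_mu)
    finally show ?thesis
      using assms(1) 3 by (simp add: Sigbar_le_mu Sig_add algebra_simps)
  next
    case 4
    then show ?thesis
      using Sigbar_superadditive[of b m] assms(1,2,4) mult_le_mono1[OF assms(4), of "e - 1"] by linarith
  qed (use assms Sigbar_0 in simp_all)
qed

end

lemma bij_betw_locally_unipotent:
  fixes f :: "'b::ab_group_add \<Rightarrow> 'b"
  assumes diff_closed: "\<And>a b. a \<in> B \<Longrightarrow> b \<in> B \<Longrightarrow> a - b \<in> B"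
    and maps_to: "\<And>a. a \<in> B \<Longrightarrow> f a \<in> B"
    and additive: "\<And>a b. a \<in> B \<Longrightarrow> b \<in> B \<Longrightarrow> f (a - b) = f a - f b"
    and nilpotent: "\<And>a. a \<in> B \<Longrightarrow> \<exists>k. ((\<lambda>b. f b - b) ^^ k) a = 0"
  shows "bij_betw f B B"
proof -
  define D where "D b = f b - b" for b
  have D_in: "D b \<in> B" if "b \<in> B" for b
    using that by (simp add: D_def diff_closed maps_to)
  have zero_in: "0 \<in> B" and f_zero: "f 0 = 0" if "b \<in> B" for b
    using diff_closed[OF that that] additive[OF that that] by simp_all
  have kernel: "b = 0" if "b \<in> B" "f b = 0" "(D ^^ k) b = 0" for k b
    using that
  proof (induction k arbitrary: b)
    case (Suc k)
    have "D b = 0 - b"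
      using Suc.prems(2) by (simp add: D_def)
    then have "f (D b) = 0"
      using additive[OF zero_in Suc.prems(1)] f_zero Suc.prems by simp
    then have "D b = 0"
      using Suc.IH[of "D b"] D_in[OF Suc.prems(1)] Suc.prems(3) by (simp add: funpow_Suc_right del: funpow.simps)
    then show ?case
      using Suc.prems(2) by (simp add: D_def)
  qed simp
  have image: "b \<in> f ` B" if "b \<in> B" "(D ^^ k) b = 0" for k b
    using that
  proof (induction k arbitrary: b)
    case 0
    then show ?case
      using f_zero by force
  next
    case (Suc k)
    have "(D ^^ k) (D b) = 0"
      using Suc.prems(2) by (simp add: funpow_Suc_right del: funpow.simps)
    then obtain a where a: "a \<in> B" "D b = f a"
      using Suc.IH D_in[OF Suc.prems(1)] by blast
    then have "b = f (b - a)"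
      using additive[OF Suc.prems(1) a(1)] by (simp add: D_def algebra_simps)
    then show ?case
      using diff_closed[OF Suc.prems(1) a(1)] by blast
  qed
  have "inj_on f B"
  proof (rule inj_onI)
    fix a b
    assume "a \<in> B" "b \<in> B" "f a = f b"
    moreover obtain k where "(D ^^ k) (a - b) = 0"
      using nilpotent[OF diff_closed[OF \<open>a \<in> B\<close> \<open>b \<in> B\<close>]] by (auto simp: D_def[abs_def])
    ultimately show "a = b"
      using kernel[of "a - b" k] diff_closed additive by simp
  qed
  moreover have "B \<subseteq> f ` B"
    using image nilpotent unfolding D_def[abs_def] by blast
  ultimately show ?thesis
    unfolding bij_betw_def using maps_to by blast
qed

lemma ring_aut_funpow:
  assumes "ring_aut B f"
  shows "ring_aut B (f ^^ m)"
proof (induction m)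
  case 0
  then show ?case
    by (simp add: ring_aut_def bij_betw_def)
next
  case (Suc m)
  have "bij_betw (f \<circ> f ^^ m) B B"
    using Suc assms unfolding ring_aut_def by (blast intro: bij_betw_trans)
  moreover have "(f ^^ m) a \<in> B" if "a \<in> B" for a
    using Suc that unfolding ring_aut_def by (blast intro: bij_betw_apply)
  ultimately show ?case
    using Suc assms unfolding ring_aut_def by simp
qed

lemma power_left_cancel:
  fixes a :: "'b::ring_1"
  assumes "\<And>t. a * t = 0 \<Longrightarrow> t = 0"
  shows "a ^ k * t = 0 \<Longrightarrow> t = 0"
  by (induction k arbitrary: t) (auto simp: mult.assoc dest: assms)

lemma power_right_cancel:
  fixes a :: "'b::ring_1"
  assumes "\<And>t. t * a = 0 \<Longrightarrow> t = 0"
  shows "t * a ^ k = 0 \<Longrightarrow> t = 0"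
  by (induction k arbitrary: t) (auto simp: power_Suc2 mult.assoc[symmetric] dest: assms simp del: power_Suc)

section \<open>Coefficients and spans of monomials\<close>

locale ore_extension =
  fixes R :: "'a::ring_1 set" and x y :: 'a and p e :: nat
  assumes ore_setup: "ore_setup R x y p e"
begin

abbreviation cf :: "'a \<Rightarrow> nat \<Rightarrow> nat \<Rightarrow> 'a" where
  "cf \<equiv> coef R x y"

abbreviation mspan :: "(nat \<times> nat) set \<Rightarrow> 'a set" where
  "mspan \<equiv> Rspan R x y"

lemma subring_R: "is_subring R"
  and R_commute_x: "a \<in> R \<Longrightarrow> a * x = x * a"
  and R_commute_y: "a \<in> R \<Longrightarrow> a * y = y * a"
  and y_x_commute: "y * x = (x + of_nat p * x ^ e) * y"
  and unique_rep: "\<exists>!c. rep R x y c s"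
  using ore_setup by (simp_all add: ore_setup_def)

lemma zero_in_R: "0 \<in> R"
  and one_in_R: "1 \<in> R"
  and add_in_R: "a \<in> R \<Longrightarrow> b \<in> R \<Longrightarrow> a + b \<in> R"
  and diff_in_R: "a \<in> R \<Longrightarrow> b \<in> R \<Longrightarrow> a - b \<in> R"
  and mult_in_R: "a \<in> R \<Longrightarrow> b \<in> R \<Longrightarrow> a * b \<in> R"
  using subring_R by (auto simp: is_subring_def)

lemma uminus_in_R: "a \<in> R \<Longrightarrow> - a \<in> R"
  using diff_in_R[OF zero_in_R] by simp

lemma of_nat_in_R: "of_nat k \<in> R"
  by (induction k) (auto simp: zero_in_R one_in_R add_in_R)

lemma R_commute_monomial: "a \<in> R \<Longrightarrow> a * (x ^ n * y ^ m) = x ^ n * y ^ m * a"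
  using power_commuting_commutes[OF R_commute_x[symmetric], of a n]
    power_commuting_commutes[OF R_commute_y[symmetric], of a m]
  by (metis mult.assoc)

definition monomial_sum :: "(nat \<times> nat) set \<Rightarrow> (nat \<Rightarrow> nat \<Rightarrow> 'a) \<Rightarrow> 'a" where
  "monomial_sum F c = (\<Sum>(n, m)\<in>F. c n m * x ^ n * y ^ m)"

definition support :: "'a \<Rightarrow> (nat \<times> nat) set" where
  "support s = {(n, m). cf s n m \<noteq> 0}"

lemma rep_coef: "rep R x y (cf s) s"
  unfolding coef_def using unique_rep by (rule theI')

lemma coef_unique: "rep R x y c s \<Longrightarrow> cf s = c"
  unfolding coef_def using unique_rep by (rule the1_equality)

lemma finite_support: "finite (support s)"
  and coef_in_R: "cf s n m \<in> R"
  and monomial_sum_support: "monomial_sum (support s) (cf s) = s"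
  using rep_coef[of s] by (simp_all add: rep_def support_def monomial_sum_def)

lemma monomial_sum_superset:
  assumes "finite F" "support s \<subseteq> F"
  shows "monomial_sum F (cf s) = s"
proof -
  have "monomial_sum F (cf s) = monomial_sum (support s) (cf s)"
    unfolding monomial_sum_def using assms by (intro sum.mono_neutral_right) (auto simp: support_def)
  then show ?thesis
    by (simp add: monomial_sum_support)
qed

lemma coef_monomial_sum:
  assumes "finite F" "\<And>n m. (n, m) \<in> F \<Longrightarrow> c n m \<in> R"
  shows "cf (monomial_sum F c) n m = (if (n, m) \<in> F then c n m else 0)"
proof -
  let ?c = "\<lambda>n m. if (n, m) \<in> F then c n m else 0"
  have sub: "{(n, m). ?c n m \<noteq> 0} \<subseteq> F"
    by auto
  have "monomial_sum F c = (\<Sum>(n, m)\<in>{(n, m). ?c n m \<noteq> 0}. ?c n m * x ^ n * y ^ m)"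
    unfolding monomial_sum_def using assms(1) sub by (intro sum.mono_neutral_cong_right) auto
  then have "rep R x y ?c (monomial_sum F c)"
    unfolding rep_def using assms zero_in_R finite_subset[OF sub] by auto
  then show ?thesis
    by (simp add: coef_unique)
qed

lemma coef_pointwise:
  assumes "\<And>n m. f (cf s n m) (cf t n m) \<in> R" "f 0 0 = 0"
    and "\<And>F. monomial_sum F (\<lambda>n m. f (cf s n m) (cf t n m)) = g (monomial_sum F (cf s)) (monomial_sum F (cf t))"
  shows "cf (g s t) n m = f (cf s n m) (cf t n m)"
proof -
  let ?F = "support s \<union> support t"
  have "g s t = monomial_sum ?F (\<lambda>n m. f (cf s n m) (cf t n m))"
    using assms(3) monomial_sum_superset[of ?F] finite_support by simp
  then show ?thesis
    using coef_monomial_sum[of ?F "\<lambda>n m. f (cf s n m) (cf t n m)"] finite_support assms(1,2)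
    by (auto simp: support_def)
qed

lemma coef_add: "cf (s + t) n m = cf s n m + cf t n m"
  by (rule coef_pointwise[where g = "(+)"])
    (simp_all add: add_in_R coef_in_R monomial_sum_def sum.distrib[symmetric] case_prod_beta distrib_right)

lemma coef_uminus: "cf (- s) n m = - cf s n m"
  by (rule coef_pointwise[where g = "\<lambda>s t. - s" and t = 0])
    (simp_all add: uminus_in_R coef_in_R monomial_sum_def sum_negf[symmetric] case_prod_beta)

lemma coef_R_mult: "a \<in> R \<Longrightarrow> cf (a * s) n m = a * cf s n m"
  by (rule coef_pointwise[where g = "\<lambda>s t. a * s" and t = 0])
    (simp_all add: mult_in_R coef_in_R monomial_sum_def sum_distrib_left case_prod_beta mult.assoc)

lemma coef_diff: "cf (s - t) n m = cf s n m - cf t n m"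
  using coef_add[of s "- t"] coef_uminus[of t] by simp

lemma coef_0 [simp]: "cf 0 n m = 0"
  using coef_diff[of 0 0] by simp

lemma coef_sum: "finite I \<Longrightarrow> cf (\<Sum>i\<in>I. f i) n m = (\<Sum>i\<in>I. cf (f i) n m)"
  by (induction I rule: finite_induct) (auto simp: coef_add)

lemma eq_0_iff_coef: "s = 0 \<longleftrightarrow> (\<forall>n m. cf s n m = 0)"
  using monomial_sum_support[of s] by (auto simp: support_def monomial_sum_def)

lemma coef_monomial: "a \<in> R \<Longrightarrow> cf (a * x ^ n * y ^ m) n' m' = (if (n', m') = (n, m) then a else 0)"
  using coef_monomial_sum[of "{(n, m)}" "\<lambda>_ _. a" n' m'] by (auto simp: monomial_sum_def)

lemma coef_mult_y: "cf (t * y) n (Suc m) = cf t n m" "cf (t * y) n 0 = 0"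
proof -
  let ?g = "\<lambda>(n, m). (n, Suc m)"
  have "t * y = (\<Sum>(n, m)\<in>support t. cf t n m * x ^ n * y ^ Suc m)"
    by (subst monomial_sum_support[of t, symmetric])
      (simp add: monomial_sum_def sum_distrib_right case_prod_beta mult.assoc power_Suc2 del: power_Suc)
  also have "\<dots> = monomial_sum (?g ` support t) (\<lambda>n m. cf t n (m - 1))"
    unfolding monomial_sum_def by (subst sum.reindex) (auto simp: inj_on_def case_prod_beta)
  finally have "cf (t * y) = cf (monomial_sum (?g ` support t) (\<lambda>n m. cf t n (m - 1)))"
    by simp
  then show "cf (t * y) n (Suc m) = cf t n m" "cf (t * y) n 0 = 0"
    using coef_monomial_sum[of "?g ` support t" "\<lambda>n m. cf t n (m - 1)"] finite_support coef_in_R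
    by (auto simp: support_def image_iff)
qed

lemma coef_x_mult: "cf (x * t) (Suc n) m = cf t n m" "cf (x * t) 0 m = 0"
proof -
  let ?g = "\<lambda>(n, m). (Suc n, m)"
  have "x * (a * x ^ n * y ^ m) = a * x ^ Suc n * y ^ m" if "a \<in> R" for a n m
    using R_commute_x[OF that] by (metis mult.assoc power_Suc)
  then have "x * t = (\<Sum>(n, m)\<in>support t. cf t n m * x ^ Suc n * y ^ m)"
    by (subst monomial_sum_support[of t, symmetric])
      (simp add: monomial_sum_def sum_distrib_left case_prod_beta coef_in_R)
  also have "\<dots> = monomial_sum (?g ` support t) (\<lambda>n m. cf t (n - 1) m)"
    unfolding monomial_sum_def by (subst sum.reindex) (auto simp: inj_on_def case_prod_beta)
  finally have "cf (x * t) = cf (monomial_sum (?g ` support t) (\<lambda>n m. cf t (n - 1) m))"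
    by simp
  then show "cf (x * t) (Suc n) m = cf t n m" "cf (x * t) 0 m = 0"
    using coef_monomial_sum[of "?g ` support t" "\<lambda>n m. cf t (n - 1) m"] finite_support coef_in_R
    by (auto simp: support_def image_iff)
qed

lemma mult_y_eq_0_iff: "t * y = 0 \<longleftrightarrow> t = 0"
  by (metis coef_0 coef_mult_y(1) eq_0_iff_coef mult_zero_left)

lemma x_mult_eq_0_iff: "x * t = 0 \<longleftrightarrow> t = 0"
  by (metis coef_0 coef_x_mult(1) eq_0_iff_coef mult_zero_right)

lemma mem_mspan_iff: "s \<in> mspan I \<longleftrightarrow> (\<forall>n m. cf s n m \<noteq> 0 \<longrightarrow> (n, m) \<in> I)"
  unfolding Rspan_def using coef_unique rep_coef by blast

lemma mspan_zero: "0 \<in> mspan I"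
  by (simp add: mem_mspan_iff)

lemma mspan_add: "s \<in> mspan I \<Longrightarrow> t \<in> mspan I \<Longrightarrow> s + t \<in> mspan I"
  unfolding mem_mspan_iff coef_add by (metis add.right_neutral add_0)

lemma mspan_diff: "s \<in> mspan I \<Longrightarrow> t \<in> mspan I \<Longrightarrow> s - t \<in> mspan I"
  unfolding mem_mspan_iff coef_diff by (metis diff_0 diff_zero minus_zero)

lemma mspan_R_mult: "a \<in> R \<Longrightarrow> s \<in> mspan I \<Longrightarrow> a * s \<in> mspan I"
  unfolding mem_mspan_iff coef_R_mult by (metis mult_zero_right)

lemma mspan_sum: "finite A \<Longrightarrow> (\<And>i. i \<in> A \<Longrightarrow> f i \<in> mspan I) \<Longrightarrow> (\<Sum>i\<in>A. f i) \<in> mspan I"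
  by (induction A rule: finite_induct) (auto simp: mspan_zero mspan_add)

lemma mspan_monomial: "a \<in> R \<Longrightarrow> (n, m) \<in> I \<Longrightarrow> a * x ^ n * y ^ m \<in> mspan I"
  by (simp add: mem_mspan_iff coef_monomial)

lemma mspan_mono: "I \<subseteq> J \<Longrightarrow> mspan I \<subseteq> mspan J"
  by (auto simp: mem_mspan_iff subset_iff)

lemma R_subset_mspan: "(0, 0) \<in> I \<Longrightarrow> R \<subseteq> mspan I"
  using mspan_monomial[of _ 0 0 I] by auto

lemma finite_subset_mspan_bounded:
  assumes "finite E" "E \<subseteq> mspan I"
  obtains B where "E \<subseteq> mspan (I \<inter> {(n, m). n \<le> B \<and> m \<le> B})"
proof
  define S where "S = \<Union> (support ` E)"
  define B where "B = Max (fst ` S \<union> snd ` S)"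
  have "finite S"
    unfolding S_def using assms(1) finite_support by simp
  show "E \<subseteq> mspan (I \<inter> {(n, m). n \<le> B \<and> m \<le> B})"
  proof (clarsimp simp: mem_mspan_iff)
    fix z n m
    assume "z \<in> E" "cf z n m \<noteq> 0"
    then have "(n, m) \<in> S" "(n, m) \<in> I"
      using assms(2) by (auto simp: S_def support_def mem_mspan_iff)
    moreover have "n \<in> fst ` S \<union> snd ` S" "m \<in> fst ` S \<union> snd ` S"
      using \<open>(n, m) \<in> S\<close> by (force simp: image_iff)+
    ultimately show "(n, m) \<in> I \<and> n \<le> B \<and> m \<le> B"
      unfolding B_def using \<open>finite S\<close> by (simp add: Max_ge)
  qed
qed

lemma mspan_mult:
  assumes s: "s \<in> mspan I" and t: "t \<in> mspan J"
    and monomials: "\<And>a b n m. (a, b) \<in> I \<Longrightarrow> (n, m) \<in> J \<Longrightarrow> x ^ a * y ^ b * (x ^ n * y ^ m) \<in> mspan K"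
  shows "s * t \<in> mspan K"
proof -
  have swap: "u * x ^ a * y ^ b * (v * x ^ n * y ^ m) = u * v * (x ^ a * y ^ b * (x ^ n * y ^ m))"
    if "v \<in> R" for u v a b n m
  proof -
    have "u * x ^ a * y ^ b * (v * x ^ n * y ^ m) = u * (x ^ a * y ^ b * v) * (x ^ n * y ^ m)"
      by (simp add: mult.assoc)
    also have "\<dots> = u * (v * (x ^ a * y ^ b)) * (x ^ n * y ^ m)"
      using R_commute_monomial[OF that] by simp
    also have "\<dots> = u * v * (x ^ a * y ^ b * (x ^ n * y ^ m))"
      by (simp only: mult.assoc)
    finally show ?thesis .
  qed
  have "s * t = monomial_sum (support s) (cf s) * monomial_sum (support t) (cf t)"
    by (simp add: monomial_sum_support)
  also have "\<dots> = (\<Sum>(a, b)\<in>support s. \<Sum>(n, m)\<in>support t.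
      (cf s a b * cf t n m) * (x ^ a * y ^ b * (x ^ n * y ^ m)))"
    unfolding monomial_sum_def sum_product
    by (rule sum.cong[OF refl], clarify, rule sum.cong[OF refl], clarify) (rule swap[OF coef_in_R])
  also have "\<dots> \<in> mspan K"
  proof (rule mspan_sum[OF finite_support], clarify, rule mspan_sum[OF finite_support], clarify)
    fix a b n m
    assume "(a, b) \<in> support s" "(n, m) \<in> support t"
    then have "(a, b) \<in> I" "(n, m) \<in> J"
      using s t by (auto simp: support_def mem_mspan_iff)
    then show "cf s a b * cf t n m * (x ^ a * y ^ b * (x ^ n * y ^ m)) \<in> mspan K"
      by (intro mspan_R_mult mult_in_R coef_in_R monomials)
  qed
  finally show ?thesis .
qed

lemma mspan_subring:
  assumes "(0, 0) \<in> I"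
    and "\<And>a b n m. (a, b) \<in> I \<Longrightarrow> (n, m) \<in> I \<Longrightarrow> x ^ a * y ^ b * (x ^ n * y ^ m) \<in> mspan I"
  shows "is_subring (mspan I)"
proof -
  have "1 \<in> mspan I"
    using R_subset_mspan[OF assms(1)] one_in_R by blast
  then show ?thesis
    unfolding is_subring_def using mspan_zero mspan_add mspan_diff mspan_mult[OF _ _ assms(2)] by simp
qed

end

section \<open>Commuting powers of \<open>y\<close> past powers of \<open>x\<close>\<close>

locale ore_char = ore_extension R x y p e for R :: "'a::ring_1 set" and x y p e +
  fixes r :: nat
  assumes e_ge_2: "e \<ge> 2" and p_power_vanishes: "(of_nat p :: 'a) ^ (r + 1) = 0"
begin

abbreviation alpha_x :: 'a where
  "alpha_x \<equiv> x + of_nat p * x ^ e"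

text \<open>Additive combinations of the \<open>p\<^sup>j x\<^bsup>n + j(e - 1)\<^esup>\<close> with \<open>j \<le> J\<close>: commuting \<open>y\<^sup>b\<close> past
  \<open>x\<^sup>n\<close> produces such coefficients (\<open>ypow_mult_xpow\<close>).\<close>

inductive_set pspan :: "nat \<Rightarrow> nat \<Rightarrow> 'a set" for n J :: nat where
  zero: "0 \<in> pspan n J"
| basic: "j \<le> J \<Longrightarrow> of_nat p ^ j * x ^ (n + j * (e - 1)) \<in> pspan n J"
| add: "u \<in> pspan n J \<Longrightarrow> v \<in> pspan n J \<Longrightarrow> u + v \<in> pspan n J"

lemma p_power_commute: "of_nat p ^ j * a = a * of_nat p ^ j"
  by (metis of_nat_power mult_of_nat_commute)

lemma p_power_in_R: "of_nat p ^ j \<in> R"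
  by (metis of_nat_in_R of_nat_power)

lemma pspan_mono: "v \<in> pspan n J \<Longrightarrow> J \<le> J' \<Longrightarrow> v \<in> pspan n J'"
  by (induction rule: pspan.induct) (blast intro: pspan.intros order_trans)+

lemma xpow_in_pspan: "x ^ n \<in> pspan n J"
  using pspan.basic[of 0 J n] by simp

lemma pspan_mult_xpow: "v \<in> pspan n J \<Longrightarrow> v * x ^ a \<in> pspan (n + a) J"
proof (induction rule: pspan.induct)
  case (basic j)
  have "of_nat p ^ j * x ^ (n + j * (e - 1)) * x ^ a = of_nat p ^ j * x ^ (n + a + j * (e - 1))"
    by (simp add: mult.assoc ac_simps flip: power_add)
  then show ?case
    using pspan.basic[OF basic] by simp
qed (auto simp: distrib_right intro: pspan.intros)

lemma xpow_mult_pspan: "v \<in> pspan n J \<Longrightarrow> x ^ a * v \<in> pspan (n + a) J"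
proof (induction rule: pspan.induct)
  case (basic j)
  have "x ^ a * (of_nat p ^ j * x ^ (n + j * (e - 1))) = of_nat p ^ j * (x ^ a * x ^ (n + j * (e - 1)))"
    by (metis mult.assoc p_power_commute)
  also have "\<dots> = of_nat p ^ j * x ^ (n + a + j * (e - 1))"
    by (simp add: ac_simps flip: power_add)
  finally show ?case
    using pspan.basic[OF basic] by simp
qed (auto simp: distrib_left intro: pspan.intros)

lemma pspan_mult_p_xpow_e: "v \<in> pspan n J \<Longrightarrow> v * (of_nat p * x ^ e) \<in> pspan (Suc n) (Suc J)"
proof (induction rule: pspan.induct)
  case (basic j)
  have "of_nat p ^ j * x ^ (n + j * (e - 1)) * (of_nat p * x ^ e)
      = of_nat p ^ Suc j * (x ^ (n + j * (e - 1)) * x ^ e)"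
    by (simp add: mult.assoc mult_of_nat_commute)
  also have "\<dots> = of_nat p ^ Suc j * x ^ (Suc n + Suc j * (e - 1))"
    using e_ge_2 by (simp add: ac_simps flip: power_add)
  finally show ?case
    using pspan.basic[of "Suc j" "Suc J" "Suc n"] basic by simp
qed (auto simp: distrib_right intro: pspan.intros)

lemma p_power_mult_pspan:
  "v \<in> pspan (n + j * (e - 1)) J \<Longrightarrow> of_nat p ^ j * v \<in> pspan n (j + J)"
proof (induction rule: pspan.induct)
  case (basic i)
  have "of_nat p ^ j * (of_nat p ^ i * x ^ (n + j * (e - 1) + i * (e - 1)))
      = of_nat p ^ (i + j) * x ^ (n + (i + j) * (e - 1))"
    by (simp add: mult.assoc[symmetric] add_mult_distrib ac_simps flip: power_add)
  then show ?case
    using pspan.basic[of "i + j" "j + J" n] basic by simp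
qed (auto simp: distrib_left intro: pspan.intros)

lemma alpha_x_power_in_pspan: "alpha_x ^ N \<in> pspan N N"
proof (induction N)
  case 0
  show ?case using xpow_in_pspan[of 0 0] by simp
next
  case (Suc N)
  have "alpha_x ^ N * x \<in> pspan (Suc N) (Suc N)"
    using pspan_mult_xpow[OF Suc, of 1] by (auto intro: pspan_mono)
  moreover have "alpha_x ^ N * (of_nat p * x ^ e) \<in> pspan (Suc N) (Suc N)"
    using pspan_mult_p_xpow_e[OF Suc] .
  ultimately show ?case
    by (simp add: power_Suc2 distrib_left pspan.add del: power_Suc)
qed

lemma alpha_x_power_eq: "\<exists>v \<in> pspan (N + (e - 1)) N. alpha_x ^ N = x ^ N + of_nat p * v"
proof (induction N)
  case 0
  show ?case by (rule bexI[OF _ pspan.zero]) simp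
next
  case (Suc N)
  then obtain v where v: "v \<in> pspan (N + (e - 1)) N" "alpha_x ^ N = x ^ N + of_nat p * v"
    by blast
  let ?v = "x ^ N * x ^ e + v * x + v * (of_nat p * x ^ e)"
  have "alpha_x ^ Suc N = (x ^ N + of_nat p * v) * alpha_x"
    using v(2) by (simp add: power_Suc2 del: power_Suc)
  also have "\<dots> = x ^ N * x + x ^ N * (of_nat p * x ^ e)
      + (of_nat p * v * x + of_nat p * v * (of_nat p * x ^ e))"
    by (simp add: distrib_left distrib_right add.assoc)
  also have "x ^ N * (of_nat p * x ^ e) = of_nat p * (x ^ N * x ^ e)"
    by (metis mult.assoc mult_of_nat_commute)
  also have "x ^ N * x + of_nat p * (x ^ N * x ^ e)
      + (of_nat p * v * x + of_nat p * v * (of_nat p * x ^ e)) = x ^ Suc N + of_nat p * ?v"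
    by (simp add: distrib_left mult.assoc power_Suc2 add.assoc del: power_Suc)
  finally have "alpha_x ^ Suc N = x ^ Suc N + of_nat p * ?v" .
  moreover have "x ^ N * x ^ e \<in> pspan (Suc N + (e - 1)) (Suc N)"
    using xpow_in_pspan[of "Suc N + (e - 1)"] e_ge_2 by (simp add: power_add[symmetric])
  moreover have "v * x \<in> pspan (Suc N + (e - 1)) (Suc N)"
    using pspan_mult_xpow[OF v(1), of 1] by (auto intro: pspan_mono)
  moreover have "v * (of_nat p * x ^ e) \<in> pspan (Suc N + (e - 1)) (Suc N)"
    using pspan_mult_p_xpow_e[OF v(1)] by simp
  ultimately show ?case
    by (blast intro: pspan.add)
qed

lemma y_mult_xpow: "y * x ^ N = alpha_x ^ N * y"
proof (induction N)
  case (Suc N)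
  have "y * x ^ Suc N = (y * x ^ N) * x"
    by (simp add: power_Suc2 mult.assoc del: power_Suc)
  also have "\<dots> = alpha_x ^ Suc N * y"
    using Suc y_x_commute by (simp add: power_Suc2 mult.assoc del: power_Suc)
  finally show ?case .
qed simp

lemma y_mult_pspan: "v \<in> pspan n J \<Longrightarrow> \<exists>w \<in> pspan n (n + e * J). y * v = w * y"
proof (induction rule: pspan.induct)
  case zero
  show ?case by (rule bexI[OF _ pspan.zero]) simp
next
  case (basic j)
  let ?N = "n + j * (e - 1)"
  have "y * (of_nat p ^ j * x ^ ?N) = of_nat p ^ j * alpha_x ^ ?N * y"
    by (metis mult.assoc p_power_commute y_mult_xpow)
  moreover have "of_nat p ^ j * alpha_x ^ ?N \<in> pspan n (j + ?N)"
    using p_power_mult_pspan[OF alpha_x_power_in_pspan] .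
  moreover have "j + ?N \<le> n + e * J"
  proof -
    have "j + j * (e - 1) = j * e"
      using e_ge_2 by (cases e) simp_all
    then show ?thesis
      using basic by simp
  qed
  ultimately show ?case
    by (blast intro: pspan_mono)
next
  case (add u v)
  then obtain w w' where "w \<in> pspan n (n + e * J)" "y * u = w * y" "w' \<in> pspan n (n + e * J)" "y * v = w' * y"
    by blast
  then show ?case
    by (intro bexI[of _ "w + w'"]) (simp_all add: distrib_left distrib_right pspan.add)
qed

lemma ypow_mult_xpow: "\<exists>w \<in> pspan n (n * Sig e b). y ^ b * x ^ n = w * y ^ b"
proof (induction b)
  case 0
  show ?case using xpow_in_pspan by auto
next
  case (Suc b)
  then obtain w where w: "w \<in> pspan n (n * Sig e b)" "y ^ b * x ^ n = w * y ^ b"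
    by blast
  obtain w' where w': "w' \<in> pspan n (n + e * (n * Sig e b))" "y * w = w' * y"
    using y_mult_pspan[OF w(1)] by blast
  have "y ^ Suc b * x ^ n = w' * y ^ Suc b"
    using w(2) w'(2) by (simp add: mult.assoc) (simp add: mult.assoc[symmetric])
  moreover have "n + e * (n * Sig e b) = n * Sig e (Suc b)"
    by (simp add: Sig_Suc_left algebra_simps)
  ultimately show ?case
    using w' by auto
qed

lemma of_nat_p_power_eq_0: "r < j \<Longrightarrow> (of_nat p :: 'a) ^ j = 0"
proof -
  assume "r < j"
  then have "j = (j - (r + 1)) + (r + 1)"
    by simp
  then have "(of_nat p :: 'a) ^ j = of_nat p ^ (j - (r + 1)) * of_nat p ^ (r + 1)"
    by (metis power_add)
  then show ?thesis
    using p_power_vanishes by simp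
qed

lemma pspan_mult_ypow:
  assumes "v \<in> pspan n J" "\<And>j. j \<le> J \<Longrightarrow> j \<le> r \<Longrightarrow> (n + j * (e - 1), M) \<in> K"
  shows "v * y ^ M \<in> mspan K"
  using assms
proof (induction rule: pspan.induct)
  case zero
  show ?case by (simp add: mspan_zero)
next
  case (basic j)
  show ?case
  proof (cases "j \<le> r")
    case True
    then show ?thesis
      using basic by (intro mspan_monomial p_power_in_R) auto
  next
    case False
    then show ?thesis
      by (simp add: of_nat_p_power_eq_0 mspan_zero)
  qed
next
  case (add u v)
  then show ?case
    by (simp add: distrib_right mspan_add)
qed

lemma monomial_product_in_mspan:
  assumes "\<And>j. j \<le> n * Sig e b \<Longrightarrow> j \<le> r \<Longrightarrow> (a + n + j * (e - 1), b + m) \<in> K"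
  shows "x ^ a * y ^ b * (x ^ n * y ^ m) \<in> mspan K"
proof -
  obtain w where w: "w \<in> pspan n (n * Sig e b)" "y ^ b * x ^ n = w * y ^ b"
    using ypow_mult_xpow by blast
  have "x ^ a * y ^ b * (x ^ n * y ^ m) = (x ^ a * w) * y ^ (b + m)"
    using w(2) by (simp add: mult.assoc power_add) (simp add: mult.assoc[symmetric])
  moreover have "x ^ a * w \<in> pspan (n + a) (n * Sig e b)"
    using xpow_mult_pspan[OF w(1)] .
  ultimately show ?thesis
    using pspan_mult_ypow[of "x ^ a * w" "n + a" "n * Sig e b" "b + m" K] assms
    by (simp add: add.commute)
qed

end

section \<open>The automorphism \<open>\<alpha>\<close>\<close>

context ore_char
begin

abbreviation Rx_pow :: "nat \<Rightarrow> 'a set" where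
  "Rx_pow d \<equiv> mspan {(n, k). k = 0 \<and> d dvd n}"

abbreviation \<alpha> :: "'a \<Rightarrow> 'a" where
  "\<alpha> \<equiv> alpha R x y p e"

definition xsupport :: "'a \<Rightarrow> nat set" where
  "xsupport s = {n. cf s n 0 \<noteq> 0}"

lemma finite_xsupport: "finite (xsupport s)"
proof -
  have "xsupport s \<subseteq> fst ` support s"
    by (force simp: xsupport_def support_def)
  then show ?thesis
    using finite_support finite_surj by blast
qed

lemma Rx_pow_subset_Rx: "Rx_pow d \<subseteq> Rx R x y"
  unfolding Rx_def by (rule mspan_mono) auto

lemma coef_Rx_pow: "s \<in> Rx_pow d \<Longrightarrow> cf s n m \<noteq> 0 \<Longrightarrow> m = 0 \<and> d dvd n"
  unfolding mem_mspan_iff by blast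

lemma coef_Rx: "s \<in> Rx R x y \<Longrightarrow> cf s n m \<noteq> 0 \<Longrightarrow> m = 0"
  unfolding Rx_def mem_mspan_iff by blast

lemma xpow_in_Rx_pow: "d dvd k \<Longrightarrow> x ^ k \<in> Rx_pow d"
  using mspan_monomial[OF one_in_R, of k 0 "{(n, k). k = 0 \<and> d dvd n}"] by simp

lemma Rx_pow_subring: "is_subring (Rx_pow d)"
  by (rule mspan_subring) (auto simp flip: power_add intro: xpow_in_Rx_pow)

lemma Rx_subring: "is_subring (Rx R x y)"
  using Rx_pow_subring[of 1] by (simp add: Rx_def)

lemma xpow_in_Rx: "x ^ k \<in> Rx R x y"
  using xpow_in_Rx_pow[of 1 k] by (simp add: Rx_def)

lemma R_subset_Rx_pow: "R \<subseteq> Rx_pow d"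
  by (rule R_subset_mspan) simp

lemma R_subset_Rx: "R \<subseteq> Rx R x y"
  using R_subset_Rx_pow Rx_pow_subset_Rx by blast

lemma Rx_eq_sum: "s \<in> Rx R x y \<Longrightarrow> s = (\<Sum>n\<in>xsupport s. cf s n 0 * x ^ n)"
proof -
  assume s: "s \<in> Rx R x y"
  have "support s = (\<lambda>n. (n, 0)) ` xsupport s"
    using coef_Rx[OF s] by (auto simp: support_def xsupport_def image_iff)
  then show ?thesis
    using monomial_sum_support[of s] unfolding monomial_sum_def
    by (simp add: sum.reindex inj_on_def)
qed

lemma alpha_eq_sum: "\<alpha> s = (\<Sum>n\<in>xsupport s. cf s n 0 * alpha_x ^ n)"
  by (simp add: alpha_def xsupport_def)

lemma pspan_in_Rx_pow: "v \<in> pspan n J \<Longrightarrow> d dvd n \<Longrightarrow> d dvd (e - 1) \<Longrightarrow> v \<in> Rx_pow d"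
  using pspan_mult_ypow[of v n J 0 "{(n, k). k = 0 \<and> d dvd n}"] by simp

lemma alpha_in_Rx_pow:
  assumes "s \<in> Rx_pow d" "d dvd (e - 1)"
  shows "\<alpha> s \<in> Rx_pow d"
  unfolding alpha_eq_sum
proof (intro mspan_sum finite_xsupport mspan_R_mult coef_in_R)
  fix n
  assume "n \<in> xsupport s"
  then have "d dvd n"
    using coef_Rx_pow[OF assms(1)] by (auto simp: xsupport_def)
  then show "alpha_x ^ n \<in> Rx_pow d"
    using pspan_in_Rx_pow[OF alpha_x_power_in_pspan _ assms(2)] by simp
qed

lemma alpha_mult_y: "s \<in> Rx R x y \<Longrightarrow> \<alpha> s * y = y * s"
proof -
  assume s: "s \<in> Rx R x y"
  have "y * (c * x ^ n) = c * alpha_x ^ n * y" if "c \<in> R" for c n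
    using R_commute_y[OF that] y_mult_xpow[of n] by (metis mult.assoc)
  then have "y * s = (\<Sum>n\<in>xsupport s. cf s n 0 * alpha_x ^ n * y)"
    by (subst Rx_eq_sum[OF s]) (simp add: sum_distrib_left coef_in_R)
  then show ?thesis
    by (simp add: alpha_eq_sum sum_distrib_right)
qed

lemma alpha_unique: "s \<in> Rx R x y \<Longrightarrow> u * y = y * s \<Longrightarrow> \<alpha> s = u"
  using alpha_mult_y[of s] mult_y_eq_0_iff[of "\<alpha> s - u"] by (simp add: left_diff_distrib)

lemma alpha_in_Rx: "s \<in> Rx R x y \<Longrightarrow> \<alpha> s \<in> Rx R x y"
  using alpha_in_Rx_pow[of s 1] by (simp add: Rx_def)

lemma alpha_add: "s \<in> Rx R x y \<Longrightarrow> t \<in> Rx R x y \<Longrightarrow> \<alpha> (s + t) = \<alpha> s + \<alpha> t"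
  by (rule alpha_unique) (simp_all add: Rx_def mspan_add alpha_mult_y distrib_left distrib_right)

lemma alpha_diff: "s \<in> Rx R x y \<Longrightarrow> t \<in> Rx R x y \<Longrightarrow> \<alpha> (s - t) = \<alpha> s - \<alpha> t"
  by (rule alpha_unique) (simp_all add: Rx_def mspan_diff alpha_mult_y left_diff_distrib right_diff_distrib)

lemma alpha_mult: "s \<in> Rx R x y \<Longrightarrow> t \<in> Rx R x y \<Longrightarrow> \<alpha> (s * t) = \<alpha> s * \<alpha> t"
proof (rule alpha_unique)
  assume s: "s \<in> Rx R x y" and t: "t \<in> Rx R x y"
  then show "s * t \<in> Rx R x y"
    using Rx_subring by (simp add: is_subring_def)
  have "\<alpha> s * \<alpha> t * y = \<alpha> s * (y * t)"
    using alpha_mult_y[OF t] by (simp add: mult.assoc)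
  also have "\<dots> = y * (s * t)"
    using alpha_mult_y[OF s] by (simp add: mult.assoc[symmetric])
  finally show "\<alpha> s * \<alpha> t * y = y * (s * t)" .
qed

lemma alpha_R: "c \<in> R \<Longrightarrow> \<alpha> c = c"
  using R_subset_Rx by (intro alpha_unique) (auto simp: R_commute_y)

lemma alpha_R_mult: "c \<in> R \<Longrightarrow> s \<in> Rx R x y \<Longrightarrow> \<alpha> (c * s) = c * \<alpha> s"
  using alpha_mult[of c s] alpha_R R_subset_Rx by auto

context
  fixes d :: nat
  assumes d_dvd: "d dvd (e - 1)"
begin

text \<open>\<open>\<alpha>(x\<^sup>n) = (x + p x\<^sup>e)\<^sup>n \<equiv> x\<^sup>n\<close> modulo \<open>p\<close> and \<open>p\<^bsup>r+1\<^esup> = 0\<close>, so \<open>\<alpha> - id\<close> is nilpotent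
  on \<open>R[x\<^sup>d]\<close>.\<close>

lemma alpha_minus_id:
  assumes s: "s \<in> Rx_pow d"
  shows "\<exists>t \<in> Rx_pow d. \<alpha> s - s = of_nat p * t"
proof -
  obtain V where V: "\<And>n. V n \<in> pspan (n + (e - 1)) n" "\<And>n. alpha_x ^ n = x ^ n + of_nat p * V n"
    using alpha_x_power_eq by metis
  let ?t = "\<Sum>n\<in>xsupport s. cf s n 0 * V n"
  have "\<alpha> s - s = (\<Sum>n\<in>xsupport s. cf s n 0 * (of_nat p * V n))"
    using Rx_eq_sum Rx_pow_subset_Rx s
    by (subst (2) Rx_eq_sum) (auto simp: alpha_eq_sum V(2) distrib_left sum_subtractf[symmetric])
  also have "\<dots> = of_nat p * ?t"
    unfolding sum_distrib_left by (intro sum.cong refl) (metis mult.assoc mult_of_nat_commute)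
  finally have "\<alpha> s - s = of_nat p * ?t" .
  moreover have "?t \<in> Rx_pow d"
  proof (intro mspan_sum finite_xsupport mspan_R_mult coef_in_R)
    fix n
    assume "n \<in> xsupport s"
    then have "d dvd n + (e - 1)"
      using coef_Rx_pow[OF s] d_dvd by (auto simp: xsupport_def)
    then show "V n \<in> Rx_pow d"
      using pspan_in_Rx_pow[OF V(1) _ d_dvd] by simp
  qed
  ultimately show ?thesis
    by blast
qed

lemma alpha_minus_id_power:
  assumes "s \<in> Rx_pow d"
  shows "\<exists>t \<in> Rx_pow d. ((\<lambda>s. \<alpha> s - s) ^^ k) s = of_nat p ^ k * t"
proof (induction k)
  case 0
  show ?case using assms by auto
next
  case (Suc k)
  then obtain t where t: "t \<in> Rx_pow d" "((\<lambda>s. \<alpha> s - s) ^^ k) s = of_nat p ^ k * t"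
    by blast
  obtain t' where t': "t' \<in> Rx_pow d" "\<alpha> t - t = of_nat p * t'"
    using alpha_minus_id[OF t(1)] by blast
  have "((\<lambda>s. \<alpha> s - s) ^^ Suc k) s = of_nat p ^ k * (\<alpha> t - t)"
    using t(2) alpha_R_mult[OF p_power_in_R] t(1) Rx_pow_subset_Rx by (auto simp: right_diff_distrib)
  also have "\<dots> = of_nat p ^ Suc k * t'"
    by (simp add: t'(2) mult.assoc power_Suc2 del: power_Suc)
  finally show ?case
    using t'(1) by blast
qed

lemma ring_aut_alpha: "ring_aut (Rx_pow d) \<alpha>"
proof -
  have "bij_betw \<alpha> (Rx_pow d) (Rx_pow d)"
  proof (rule bij_betw_locally_unipotent)
    fix s
    assume "s \<in> Rx_pow d"
    then obtain t where "((\<lambda>s. \<alpha> s - s) ^^ (r + 1)) s = of_nat p ^ (r + 1) * t"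
      using alpha_minus_id_power by blast
    then show "\<exists>k. ((\<lambda>s. \<alpha> s - s) ^^ k) s = 0"
      using p_power_vanishes by (metis mult_zero_left)
  qed (use mspan_diff alpha_in_Rx_pow[OF _ d_dvd] alpha_diff Rx_pow_subset_Rx in blast)+
  then show ?thesis
    unfolding ring_aut_def using alpha_add alpha_mult alpha_R[OF one_in_R] Rx_pow_subset_Rx by blast
qed

end

lemma ypow_mult_Rx: "q \<in> Rx R x y \<Longrightarrow> y ^ m * q = (\<alpha> ^^ m) q * y ^ m"
proof (induction m)
  case (Suc m)
  have "(\<alpha> ^^ m) q \<in> Rx R x y"
    using Suc.prems by (induction m) (simp_all add: alpha_in_Rx)
  then have "y * (\<alpha> ^^ m) q = \<alpha> ((\<alpha> ^^ m) q) * y"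
    by (simp add: alpha_mult_y)
  then show ?case
    using Suc by (simp add: mult.assoc) (simp add: mult.assoc[symmetric])
qed simp

end

section \<open>Regularity of \<open>x\<close> and \<open>y\<close>\<close>

context ore_char
begin

text \<open>The decomposition \<open>t = \<Sum>\<^sub>m q\<^sub>m y\<^sup>m\<close> with \<open>q\<^sub>m \<in> R[x]\<close>.\<close>

definition ycoef :: "nat \<Rightarrow> 'a \<Rightarrow> 'a" where
  "ycoef m t = monomial_sum {(n, 0) | n. cf t n m \<noteq> 0} (\<lambda>n _. cf t n m)"

definition ysupport :: "'a \<Rightarrow> nat set" where
  "ysupport t = snd ` support t"

lemma finite_ysupport: "finite (ysupport t)"
  unfolding ysupport_def using finite_support by simp

lemma coef_ycoef: "cf (ycoef m t) n k = (if k = 0 then cf t n m else 0)"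
proof -
  have "{(n, 0::nat) | n. cf t n m \<noteq> 0} = (\<lambda>n. (n, 0)) ` {n. (n, m) \<in> support t}"
    by (auto simp: support_def)
  moreover have "finite {n. (n, m) \<in> support t}"
    using finite_vimageI[OF finite_support, of "\<lambda>n. (n, m)"] by (simp add: vimage_def inj_on_def)
  ultimately have "finite {(n, 0::nat) | n. cf t n m \<noteq> 0}"
    by simp
  then show ?thesis
    unfolding ycoef_def by (subst coef_monomial_sum) (auto simp: coef_in_R)
qed

lemma ycoef_in_Rx: "ycoef m t \<in> Rx R x y"
  unfolding Rx_def mem_mspan_iff coef_ycoef by auto

lemma coef_Rx_mult_ypow: "q \<in> Rx R x y \<Longrightarrow> cf (q * y ^ m) n k = (if k = m then cf q n 0 else 0)"
proof (induction m arbitrary: k)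
  case 0
  then show ?case
    using coef_Rx[OF 0] by auto
next
  case (Suc m)
  then show ?case
    by (cases k) (simp_all add: power_Suc2 mult.assoc[symmetric] coef_mult_y del: power_Suc)
qed

lemma sum_ycoef: "(\<Sum>m\<in>ysupport t. ycoef m t * y ^ m) = t"
proof -
  have "cf (\<Sum>m\<in>ysupport t. ycoef m t * y ^ m) n k = cf t n k" for n k
  proof -
    have "cf (\<Sum>m\<in>ysupport t. ycoef m t * y ^ m) n k = (\<Sum>m\<in>ysupport t. if k = m then cf t n m else 0)"
      by (simp add: coef_sum finite_ysupport coef_Rx_mult_ypow ycoef_in_Rx coef_ycoef)
    also have "\<dots> = cf t n k"
      using finite_ysupport by (auto simp: ysupport_def support_def image_iff)
    finally show ?thesis .
  qed
  then show ?thesis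
    using eq_0_iff_coef[of "(\<Sum>m\<in>ysupport t. ycoef m t * y ^ m) - t"] by (simp add: coef_diff)
qed

lemma ycoef_nonzero: "m \<in> ysupport t \<Longrightarrow> ycoef m t \<noteq> 0"
  by (auto simp: ysupport_def support_def coef_ycoef dest: arg_cong[where f = "\<lambda>s. cf s _ 0"])

lemma Rx_graded_sum_eq_0:
  assumes "finite M" "inj_on f M" "\<And>m. m \<in> M \<Longrightarrow> u m \<in> Rx R x y"
    and "(\<Sum>m\<in>M. u m * y ^ f m) = 0" "m0 \<in> M"
  shows "u m0 = 0"
proof -
  have "cf (u m0) n k = 0" for n k
  proof (cases "k = 0")
    case True
    have "0 = cf (\<Sum>m\<in>M. u m * y ^ f m) n (f m0)"
      using assms(4) by simp
    also have "\<dots> = (\<Sum>m\<in>M. if m = m0 then cf (u m) n 0 else 0)"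
      using assms(1,2,3,5) by (auto simp: coef_sum coef_Rx_mult_ypow inj_on_eq_iff intro!: sum.cong)
    also have "\<dots> = cf (u m0) n 0"
      using assms(1,5) by simp
    finally show ?thesis
      using True by simp
  qed (use coef_Rx[OF assms(3)[OF assms(5)]] in blast)
  then show ?thesis
    using eq_0_iff_coef by blast
qed

lemma ycoefs_eq_0:
  assumes "\<And>m. m \<in> ysupport t \<Longrightarrow> ycoef m t = 0"
  shows "t = 0"
proof -
  have "ysupport t = {}"
    using assms ycoef_nonzero by blast
  then show ?thesis
    using sum_ycoef[of t] by simp
qed

lemma y_mult_eq_0_iff: "y * t = 0 \<longleftrightarrow> t = 0"
proof
  assume yt: "y * t = 0"
  have "(\<Sum>m\<in>ysupport t. \<alpha> (ycoef m t) * y ^ Suc m) = (\<Sum>m\<in>ysupport t. y * (ycoef m t * y ^ m))"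
    by (intro sum.cong refl) (simp add: mult.assoc[symmetric] alpha_mult_y[OF ycoef_in_Rx])
  also have "\<dots> = y * t"
    by (simp add: sum_distrib_left[symmetric] sum_ycoef)
  finally have "(\<Sum>m\<in>ysupport t. \<alpha> (ycoef m t) * y ^ Suc m) = y * t" .
  then have zero: "\<alpha> (ycoef m t) = 0" if "m \<in> ysupport t" for m
    using yt that by (intro Rx_graded_sum_eq_0[of "ysupport t" Suc "\<lambda>m. \<alpha> (ycoef m t)"])
      (simp_all add: finite_ysupport alpha_in_Rx ycoef_in_Rx)
  have inj: "inj_on \<alpha> (Rx R x y)"
    using ring_aut_alpha[of 1] by (simp add: ring_aut_def bij_betw_def Rx_def)
  have "0 \<in> Rx R x y" "\<alpha> 0 = 0"
    using Rx_subring alpha_R[OF zero_in_R] by (simp_all add: is_subring_def)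
  then have "ycoef m t = 0" if "m \<in> ysupport t" for m
    using inj_onD[OF inj _ ycoef_in_Rx] zero[OF that] by simp
  then show "t = 0"
    by (rule ycoefs_eq_0)
qed simp

lemma Rx_commute_x: "q \<in> Rx R x y \<Longrightarrow> q * x = x * q"
proof -
  assume q: "q \<in> Rx R x y"
  have "c * x ^ n * x = x * (c * x ^ n)" if "c \<in> R" for c n
    using R_commute_x[OF that] by (metis mult.assoc power_commutes)
  then show ?thesis
    by (subst (1 2) Rx_eq_sum[OF q]) (simp add: sum_distrib_left sum_distrib_right coef_in_R)
qed

lemma mult_x_eq_0_iff: "t * x = 0 \<longleftrightarrow> t = 0"
proof
  assume tx: "t * x = 0"
  have aut: "ring_aut (Rx R x y) (\<alpha> ^^ m)" for m
    using ring_aut_funpow[OF ring_aut_alpha[of 1]] by (simp add: Rx_def)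
  have x_in: "x \<in> Rx R x y"
    using xpow_in_Rx[of 1] by simp
  have "(\<Sum>m\<in>ysupport t. (ycoef m t * (\<alpha> ^^ m) x) * y ^ id m) = (\<Sum>m\<in>ysupport t. ycoef m t * y ^ m * x)"
    by (intro sum.cong refl) (simp add: mult.assoc ypow_mult_Rx[OF x_in])
  also have "\<dots> = t * x"
    by (simp add: sum_distrib_right[symmetric] sum_ycoef)
  finally have "(\<Sum>m\<in>ysupport t. (ycoef m t * (\<alpha> ^^ m) x) * y ^ id m) = t * x" .
  moreover have "ycoef m t * (\<alpha> ^^ m) x \<in> Rx R x y" for m
    using aut[of m] x_in ycoef_in_Rx Rx_subring unfolding ring_aut_def is_subring_def
    by (metis bij_betw_apply)
  ultimately have zero: "ycoef m t * (\<alpha> ^^ m) x = 0" if "m \<in> ysupport t" for m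
    using tx that by (intro Rx_graded_sum_eq_0[of "ysupport t" id "\<lambda>m. ycoef m t * (\<alpha> ^^ m) x"])
      (simp_all add: finite_ysupport)
  have "ycoef m t = 0" if "m \<in> ysupport t" for m
  proof -
    have bij: "bij_betw (\<alpha> ^^ m) (Rx R x y) (Rx R x y)"
      and hom: "\<And>a b. a \<in> Rx R x y \<Longrightarrow> b \<in> Rx R x y \<Longrightarrow> (\<alpha> ^^ m) (a * b) = (\<alpha> ^^ m) a * (\<alpha> ^^ m) b"
      using aut[of m] by (simp_all add: ring_aut_def)
    obtain q where q: "q \<in> Rx R x y" "(\<alpha> ^^ m) q = ycoef m t"
      using bij ycoef_in_Rx by (metis bij_betw_imp_surj_on imageE)
    have zero_in: "0 \<in> Rx R x y" and qx: "q * x \<in> Rx R x y"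
      using Rx_subring q(1) x_in by (simp_all add: is_subring_def)
    have fix_0: "(\<alpha> ^^ m) 0 = 0"
      by (induction m) (simp_all add: alpha_R[OF zero_in_R])
    have "(\<alpha> ^^ m) (q * x) = (\<alpha> ^^ m) 0"
      using hom[OF q(1) x_in] fix_0 q(2) zero[OF that] by simp
    then have "q * x = 0"
      using bij qx zero_in by (auto simp: bij_betw_def dest: inj_onD)
    then have "x * q = 0"
      using Rx_commute_x[OF q(1)] by simp
    then show ?thesis
      using q(2) fix_0 by (simp add: x_mult_eq_0_iff)
  qed
  then show "t = 0"
    by (rule ycoefs_eq_0)
qed simp

lemma monomial_mult_eq_0_iff: "x ^ N * y ^ k * t = 0 \<longleftrightarrow> t = 0"
  using power_left_cancel[of x N "y ^ k * t"] power_left_cancel[of y k t]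
  by (auto simp: mult.assoc x_mult_eq_0_iff y_mult_eq_0_iff)

lemma mult_monomial_eq_0_iff: "t * (x ^ N * y ^ k) = 0 \<longleftrightarrow> t = 0"
  using power_right_cancel[of x t N] power_right_cancel[of y "t * x ^ N" k]
  by (auto simp: mult.assoc[symmetric] mult_x_eq_0_iff mult_y_eq_0_iff)

lemma regular_in_Rx_xpow: "regular_in (Rx R x y) (x ^ k)"
  unfolding regular_in_def
  using monomial_mult_eq_0_iff[of k 0] mult_monomial_eq_0_iff[of _ k 0] xpow_in_Rx by auto

end

lemma Tset_mult_closed:
  assumes "c \<ge> 1" "e \<ge> 2" "d dvd (e - 1)"
    and "(a, b) \<in> Tset c d e r" "(n, m) \<in> Tset c d e r" "j \<le> n * Sig e b" "j \<le> r"
  shows "(a + n + j * (e - 1), b + m) \<in> Tset c d e r"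
proof -
  have ab: "c * b \<le> a" "d dvd (a - c * b)" "a \<le> Sigbar c e r b"
    and nm: "c * m \<le> n" "d dvd (n - c * m)" "n \<le> Sigbar c e r m"
    using assms(4,5) by (auto simp: Tset_def)
  have "a + n + j * (e - 1) - c * (b + m) = (a - c * b) + (n - c * m) + j * (e - 1)"
    using ab(1) nm(1) by (simp add: algebra_simps)
  moreover have "d dvd (a - c * b) + (n - c * m) + j * (e - 1)"
    using ab(2) nm(2) assms(3) by simp
  moreover have "a + n + j * (e - 1) \<le> Sigbar c e r (b + m)"
    using Sigbar_product_bound[OF assms(1,2) ab(3) nm(3) assms(6,7)] .
  ultimately show ?thesis
    using ab(1) nm(1) by (simp add: Tset_def algebra_simps)
qed

lemma Ttilde_iff: "(n, m) \<in> Ttilde c d \<longleftrightarrow> int d dvd int n - int c * int m"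
  by (simp add: Ttilde_def)

lemma Ttilde_mult_closed:
  assumes "d dvd (e - 1)" "(a, b) \<in> Ttilde c d" "(n, m) \<in> Ttilde c d"
  shows "(a + n + j * (e - 1), b + m) \<in> Ttilde c d"
proof -
  have eq: "int (a + n + j * (e - 1)) - int c * int (b + m)
      = (int a - int c * int b) + (int n - int c * int m) + int j * int (e - 1)"
    by (simp only: of_nat_add of_nat_mult) (simp add: algebra_simps)
  have "int d dvd int (e - 1)"
    using assms(1) by simp
  then have "int d dvd (int a - int c * int b) + (int n - int c * int m) + int j * int (e - 1)"
    using assms(2,3) unfolding Ttilde_iff by (intro dvd_add dvd_mult)
  then show ?thesis
    unfolding Ttilde_iff eq .
qed

lemma Tset_subset_Ttilde: "Tset c d e r \<subseteq> Ttilde c d"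
proof clarify
  fix n m
  assume "(n, m) \<in> Tset c d e r"
  then have "c * m \<le> n" "d dvd n - c * m"
    by (auto simp: Tset_def)
  moreover from \<open>c * m \<le> n\<close> have "int (n - c * m) = int n - int c * int m"
    by (simp add: of_nat_diff)
  ultimately show "(n, m) \<in> Ttilde c d"
    unfolding Ttilde_iff by (metis int_dvd_int_iff)
qed

text \<open>A single monomial of \<open>Tset\<close> multiplies every monomial of \<open>Ttilde\<close> of bounded degree
  into \<open>Tset\<close>: beyond \<open>\<mu>\<close> the bound \<open>\<Sigma>\<close>-bar grows with slope \<open>c + r (e - 1)\<close>, which leaves room
  for any bounded excess.\<close>

lemma Tset_absorbs_bounded_Ttilde:
  assumes c: "c \<ge> 1" and e: "e \<ge> 2" and d: "d \<ge> 1" "d dvd (e - 1)" and r: "r \<ge> 1"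
  obtains N k where "(N, k) \<in> Tset c d e r"
    and "\<And>n m j. (n, m) \<in> Ttilde c d \<Longrightarrow> n \<le> B \<Longrightarrow> m \<le> B \<Longrightarrow> j \<le> r \<Longrightarrow>
      (N + n + j * (e - 1), k + m) \<in> Tset c d e r"
proof
  define \<mu> where "\<mu> = mu c e r"
  define L where "L = c + r * (e - 1)"
  define K where "K = d * c * B + B + r * (e - 1) + 1"
  define k where "k = \<mu> + K"
  define N where "N = c * k + d * c * B"
  have "1 \<le> r * (e - 1)"
    using mult_le_mono[OF r, of 1 "e - 1"] e by simp
  then have K_le: "K \<le> K * (r * (e - 1))"
    using mult_le_mono2[of 1 "r * (e - 1)" K] by simp
  have c_mu: "c * \<mu> \<le> c * Sig e \<mu>"
    using le_Sig[of e \<mu>] e by simp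
  have Sigbar_k: "Sigbar c e r (k + m) = c * Sig e \<mu> + (K + m) * L" for m
    using Sigbar_ge_mu[OF c e, of r "k + m"] unfolding \<mu>_def[symmetric] L_def k_def by simp
  have N_eq: "N = c * \<mu> + c * K + d * c * B"
    unfolding N_def k_def by (simp add: algebra_simps)
  have "K * L = c * K + K * (r * (e - 1))"
    unfolding L_def by (simp add: algebra_simps)
  moreover have "Sigbar c e r k = c * Sig e \<mu> + K * L"
    using Sigbar_k[of 0] by simp
  moreover have "d * c * B \<le> K"
    unfolding K_def by simp
  ultimately have "N \<le> Sigbar c e r k"
    using N_eq K_le c_mu by linarith
  then show "(N, k) \<in> Tset c d e r"
    unfolding Tset_def N_def by simp
  fix n m j
  assume nm: "(n, m) \<in> Ttilde c d" "n \<le> B" "m \<le> B" and j: "j \<le> r"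
  have "c * m \<le> d * c * B"
    using mult_le_mono[OF d(1) mult_le_mono2[OF nm(3)]] by (simp add: mult.assoc)
  then have low: "c * (k + m) \<le> N + n + j * (e - 1)"
    unfolding N_def distrib_left by linarith
  have "int (N + n + j * (e - 1) - c * (k + m)) = int (N + n + j * (e - 1)) - int (c * (k + m))"
    using low by (rule of_nat_diff)
  also have "\<dots> = int d * (int c * int B) + (int n - int c * int m) + int j * int (e - 1)"
    unfolding N_def by (simp only: of_nat_add of_nat_mult) (simp add: algebra_simps)
  finally have eq: "int (N + n + j * (e - 1) - c * (k + m))
      = int d * (int c * int B) + (int n - int c * int m) + int j * int (e - 1)" .
  have "int d dvd int (e - 1)"
    using d(2) by simp
  then have "int d dvd int (N + n + j * (e - 1) - c * (k + m))"
    using nm(1) unfolding Ttilde_iff eq by (intro dvd_add dvd_mult dvd_triv_left)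
  moreover have "N + n + j * (e - 1) \<le> Sigbar c e r (k + m)"
  proof -
    have "c * K + K * t \<le> (K + m) * (c + t)" for t
      by (simp add: algebra_simps)
    then have "c * K + K * (r * (e - 1)) \<le> (K + m) * L"
      unfolding L_def .
    moreover have "j * (e - 1) \<le> r * (e - 1)"
      using j by (rule mult_le_mono1)
    then have "d * c * B + n + j * (e - 1) < K"
      using nm(2) unfolding K_def by linarith
    ultimately show ?thesis
      using Sigbar_k[of m] N_eq K_le c_mu by linarith
  qed
  ultimately show "(N + n + j * (e - 1), k + m) \<in> Tset c d e r"
    using low unfolding Tset_def by simp
qed

section \<open>The subrings \<open>A\<close> and \<open>A\<close>-tilde\<close>

context ore_char
begin

lemma Rx_commute_xpow: "q \<in> Rx R x y \<Longrightarrow> q * x ^ k = x ^ k * q"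
  using power_commuting_commutes[OF Rx_commute_x[symmetric]] by simp

lemma monomial_nonzero: "x ^ n * y ^ m \<noteq> 0"
  using coef_monomial[OF one_in_R, of n m n m] by auto

lemma deg_y_monomial: "deg_y R x y (x ^ n * y ^ m) = m"
proof -
  have "{m'. \<exists>n'. cf (x ^ n * y ^ m) n' m' \<noteq> 0} = {m}"
    using coef_monomial[OF one_in_R, of n m] by auto
  then show ?thesis
    unfolding deg_y_def by simp
qed

lemma mspan_eq_graded_sums:
  "mspan I = {\<Sum>m\<in>F. g m | F g. finite F \<and> (\<forall>m\<in>F. g m \<in> mspan I \<and> (\<exists>q\<in>Rx R x y. g m = q * y ^ m))}"
proof (intro equalityI subsetI)
  fix s
  assume s: "s \<in> mspan I"
  have "ycoef m s * y ^ m \<in> mspan I" for m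
    using s by (auto simp: mem_mspan_iff coef_Rx_mult_ypow[OF ycoef_in_Rx] coef_ycoef split: if_splits)
  then show "s \<in> {\<Sum>m\<in>F. g m | F g. finite F \<and> (\<forall>m\<in>F. g m \<in> mspan I \<and> (\<exists>q\<in>Rx R x y. g m = q * y ^ m))}"
    unfolding mem_Collect_eq
    by (intro exI[of _ "ysupport s"] exI[of _ "\<lambda>m. ycoef m s * y ^ m"])
      (use sum_ycoef[of s] finite_ysupport ycoef_in_Rx in auto)
qed (auto intro: mspan_sum)

context
  fixes c d :: nat
  assumes c_ge_1: "c \<ge> 1" and d_ge_1: "d \<ge> 1" and d_dvd: "d dvd (e - 1)" and r_ge_1: "r \<ge> 1"
begin

abbreviation A :: "'a set" where
  "A \<equiv> mspan (Tset c d e r)"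

abbreviation A_tilde :: "'a set" where
  "A_tilde \<equiv> mspan (Ttilde c d)"

lemma subring_A: "is_subring A"
proof (rule mspan_subring)
  show "(0, 0) \<in> Tset c d e r"
    using Sigbar_0[OF c_ge_1 e_ge_2] by (simp add: Tset_def)
next
  fix a b n m
  assume "(a, b) \<in> Tset c d e r" "(n, m) \<in> Tset c d e r"
  then show "x ^ a * y ^ b * (x ^ n * y ^ m) \<in> A"
    by (intro monomial_product_in_mspan Tset_mult_closed[OF c_ge_1 e_ge_2 d_dvd])
qed

lemma subring_A_tilde: "is_subring A_tilde"
proof (rule mspan_subring)
  show "(0, 0) \<in> Ttilde c d"
    by (simp add: Ttilde_def)
next
  fix a b n m
  assume "(a, b) \<in> Ttilde c d" "(n, m) \<in> Ttilde c d"
  then show "x ^ a * y ^ b * (x ^ n * y ^ m) \<in> A_tilde"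
    by (intro monomial_product_in_mspan Ttilde_mult_closed[OF d_dvd])
qed

lemma A_subset_A_tilde: "A \<subseteq> A_tilde"
  by (rule mspan_mono[OF Tset_subset_Ttilde])

lemma monomial_absorbs_finite_subset:
  assumes "finite E" "E \<subseteq> A_tilde"
  obtains N k where "(N, k) \<in> Tset c d e r" "\<And>z. z \<in> E \<Longrightarrow> x ^ N * y ^ k * z \<in> A"
proof -
  obtain B where B: "E \<subseteq> mspan (Ttilde c d \<inter> {(n, m). n \<le> B \<and> m \<le> B})"
    using finite_subset_mspan_bounded[OF assms] .
  obtain N k where Nk: "(N, k) \<in> Tset c d e r"
    and absorb: "\<And>n m j. (n, m) \<in> Ttilde c d \<Longrightarrow> n \<le> B \<Longrightarrow> m \<le> B \<Longrightarrow> j \<le> r \<Longrightarrow>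
      (N + n + j * (e - 1), k + m) \<in> Tset c d e r"
    using Tset_absorbs_bounded_Ttilde[OF c_ge_1 e_ge_2 d_ge_1 d_dvd r_ge_1] by blast
  have "x ^ N * y ^ k * z \<in> A" if "z \<in> E" for z
  proof (rule mspan_mult)
    show "x ^ N * y ^ k \<in> mspan {(N, k)}"
      using mspan_monomial[OF one_in_R, of N k] by simp
    show "z \<in> mspan (Ttilde c d \<inter> {(n, m). n \<le> B \<and> m \<le> B})"
      using B that by blast
    fix a b n m
    assume "(a, b) \<in> {(N, k)}" "(n, m) \<in> Ttilde c d \<inter> {(n, m). n \<le> B \<and> m \<le> B}"
    then show "x ^ a * y ^ b * (x ^ n * y ^ m) \<in> A"
      by (auto intro!: monomial_product_in_mspan absorb)
  qed
  with Nk show ?thesis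
    using that by blast
qed

lemma strongly_nicely_essential_A: "strongly_nicely_essential A A_tilde"
  unfolding strongly_nicely_essential_def nicely_essential_def
proof (intro conjI allI impI ballI)
  fix E
  assume "finite E" "E \<subseteq> A_tilde - {0}"
  then obtain N k where "(N, k) \<in> Tset c d e r" "\<And>z. z \<in> E \<Longrightarrow> x ^ N * y ^ k * z \<in> A"
    using monomial_absorbs_finite_subset[of E] by blast
  moreover have "x ^ N * y ^ k \<in> A" if "(N, k) \<in> Tset c d e r" for N k
    using mspan_monomial[OF one_in_R that] by simp
  ultimately show "\<exists>a\<in>A. \<forall>z\<in>E. a * z \<noteq> 0 \<and> a * z \<in> A"
    using \<open>E \<subseteq> A_tilde - {0}\<close> monomial_mult_eq_0_iff by blast
next
  fix z
  assume "z \<in> A_tilde"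
  then obtain N k where Nk: "(N, k) \<in> Tset c d e r" "x ^ N * y ^ k * z \<in> A"
    using monomial_absorbs_finite_subset[of "{z}"] by blast
  moreover have "x ^ N * y ^ k \<in> A"
    using mspan_monomial[OF one_in_R Nk(1)] by simp
  moreover have "{a \<in> A. a * (x ^ N * y ^ k) = 0} = {0}"
    using mult_monomial_eq_0_iff mspan_zero by auto
  ultimately show "\<exists>c\<in>A. {a \<in> A. a * c = 0} = {0} \<and> c * z \<in> A"
    by blast
qed

lemma monomial_in_A_tilde: "x ^ (c * m) * y ^ m \<in> A_tilde"
  using mspan_monomial[OF one_in_R, of "c * m" m "Ttilde c d"] by (simp add: Ttilde_def)

lemma Deg_y_A_tilde: "Deg_y R x y A_tilde = UNIV"
proof -
  have "m \<in> Deg_y R x y A_tilde" for m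
    unfolding Deg_y_def mem_Collect_eq
    by (rule exI[of _ "x ^ (c * m) * y ^ m"]) (simp add: monomial_in_A_tilde monomial_nonzero deg_y_monomial)
  then show ?thesis
    by blast
qed

lemma d_of_A_tilde: "d_of R x y A_tilde = 1"
proof -
  have "\<not> A_tilde \<subseteq> Rx R x y"
  proof
    assume "A_tilde \<subseteq> Rx R x y"
    then have "x ^ c * y \<in> Rx R x y"
      using monomial_in_A_tilde[of 1] by auto
    then show False
      using coef_Rx[of "x ^ c * y" c 1] coef_monomial[OF one_in_R, of c 1 c 1] by simp
  qed
  moreover have "Gcd (UNIV - {0::nat}) dvd 1"
    by (rule Gcd_dvd) simp
  ultimately show ?thesis
    by (simp add: d_of_def Deg_y_A_tilde)
qed

lemma lambda_mult_Rx_pow: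
  assumes "q \<in> Rx_pow d"
  shows "x ^ (c * m) * y ^ m * q = (\<alpha> ^^ m) q * (x ^ (c * m) * y ^ m)"
proof -
  have q: "q \<in> Rx R x y"
    using assms Rx_pow_subset_Rx by blast
  have "(\<alpha> ^^ m) q \<in> Rx R x y"
    using q by (induction m) (simp_all add: alpha_in_Rx)
  then have "x ^ (c * m) * ((\<alpha> ^^ m) q * y ^ m) = (\<alpha> ^^ m) q * (x ^ (c * m) * y ^ m)"
    by (simp add: mult.assoc[symmetric] Rx_commute_xpow)
  then show ?thesis
    using ypow_mult_Rx[OF q, of m] by (simp add: mult.assoc)
qed

text \<open>Multiplying by \<open>x\<^bsup>(d-1)cm\<^esup>\<close> moves the \<open>x\<close>-degrees of \<open>q\<close>, all \<open>\<equiv> cm (mod d)\<close>, into \<open>d\<nat>\<close>.\<close>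

lemma regular_multiple_in_Rx_pow_lambda:
  assumes q: "q \<in> Rx R x y" and qy: "q * y ^ m \<in> A_tilde"
  shows "\<exists>u\<in>Rx_pow d. regular_in (Rx R x y) u \<and> u * q * y ^ m \<in> {b * (x ^ (c * m) * y ^ m) | b. b \<in> Rx_pow d}"
proof (intro bexI[of _ "x ^ (d * (c * m))"] conjI)
  obtain d' where d: "d = Suc d'"
    using d_ge_1 by (cases d) auto
  let ?J = "{(n, k). k = 0 \<and> int d dvd int n - int c * int m}"
  let ?a = "d' * (c * m)"
  have "q \<in> mspan ?J"
    unfolding mem_mspan_iff
  proof (intro allI impI)
    fix n k
    assume nz: "cf q n k \<noteq> 0"
    then have "k = 0"
      by (rule coef_Rx[OF q])
    then have "cf (q * y ^ m) n m \<noteq> 0"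
      using nz coef_Rx_mult_ypow[OF q] by simp
    then have "(n, m) \<in> Ttilde c d"
      using qy unfolding mem_mspan_iff by blast
    with \<open>k = 0\<close> show "(n, k) \<in> ?J"
      by (simp add: Ttilde_iff)
  qed
  have dvd: "d dvd ?a + n" if "int d dvd int n - int c * int m" for n
  proof -
    have eq: "int (?a + n) = int d * (int c * int m) + (int n - int c * int m)"
      unfolding d by (simp add: algebra_simps)
    have "int d dvd int d * (int c * int m) + (int n - int c * int m)"
      using that by (intro dvd_add dvd_triv_left)
    then have "int d dvd int (?a + n)"
      unfolding eq .
    then show ?thesis
      by (simp only: int_dvd_int_iff)
  qed
  have "x ^ ?a * q \<in> Rx_pow d"
  proof (rule mspan_mult)
    show "x ^ ?a \<in> mspan {(?a, 0)}"
      using mspan_monomial[OF one_in_R, of ?a 0] by simp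
    show "q \<in> mspan ?J" by fact
    fix a b n k :: nat
    assume "(a, b) \<in> {(?a, 0)}" "(n, k) \<in> ?J"
    then show "x ^ a * y ^ b * (x ^ n * y ^ k) \<in> Rx_pow d"
      using xpow_in_Rx_pow[OF dvd] by (simp add: power_add)
  qed
  moreover have "x ^ (d * (c * m)) * q * y ^ m = x ^ ?a * q * (x ^ (c * m) * y ^ m)"
  proof -
    have "x ^ (d * (c * m)) = x ^ ?a * x ^ (c * m)"
      unfolding d by (metis add.commute mult_Suc power_add)
    then have "x ^ (d * (c * m)) * q * y ^ m = x ^ ?a * (x ^ (c * m) * q) * y ^ m"
      by (simp add: mult.assoc)
    also have "\<dots> = x ^ ?a * (q * x ^ (c * m)) * y ^ m"
      using Rx_commute_xpow[OF q] by simp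
    also have "\<dots> = x ^ ?a * q * (x ^ (c * m) * y ^ m)"
      by (simp only: mult.assoc)
    finally show ?thesis .
  qed
  ultimately show "x ^ (d * (c * m)) * q * y ^ m \<in> {b * (x ^ (c * m) * y ^ m) | b. b \<in> Rx_pow d}"
    by blast
qed (simp_all add: regular_in_Rx_xpow xpow_in_Rx_pow)

lemma special_with_A_tilde:
  "special_with R x y A_tilde (\<lambda>m. x ^ (c * m)) (\<lambda>m. Rx_pow d) (\<lambda>m. \<alpha> ^^ m)"
  unfolding special_with_def Let_def
proof (intro conjI ballI impI)
  show "R \<subseteq> A_tilde"
    by (rule R_subset_mspan) (simp add: Ttilde_def)
  have "Rx_pow d \<subseteq> A_tilde"
    by (rule mspan_mono) (auto simp: Ttilde_def)
  then show "Rx_pow d \<subseteq> A_tilde \<inter> Rx R x y"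
    using Rx_pow_subset_Rx by blast
  show "Deg_y R x y A_tilde = {d_of R x y A_tilde * k |k. True}"
    unfolding d_of_A_tilde Deg_y_A_tilde by simp
  show "\<exists>u\<in>Rx_pow d. regular_in (Rx R x y) u \<and> u * q * y ^ m \<in> {b * (x ^ (c * m) * y ^ m) |b. b \<in> Rx_pow d}"
    if "m \<in> Deg_y R x y A_tilde" "m \<noteq> 0" "q \<in> Rx R x y" "q * y ^ m \<in> A_tilde" for m q
    using that(3,4) by (rule regular_multiple_in_Rx_pow_lambda)
qed (simp_all add: subring_A_tilde mspan_eq_graded_sums[symmetric] monomial_in_A_tilde regular_in_Rx_xpow
    Rx_pow_subring R_subset_Rx_pow ring_aut_funpow[OF ring_aut_alpha[OF d_dvd]] lambda_mult_Rx_pow)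

end

end

theorem mainTheorem20:
  fixes R :: "'a::ring_1 set" and x y :: 'a and p e r c d :: nat
  assumes "prime p" and "e \<ge> 2" and "r \<ge> 2" and "c \<ge> 1" and "d \<ge> 1" and "d dvd (e - 1)"
    and "CHAR('a) = p ^ (r + 1)"
    and "ore_setup R x y p e"
  shows "is_subring (Rspan R x y (Tset c d e r)) \<and> is_subring (Rspan R x y (Ttilde c d)) \<and>
    Rspan R x y (Tset c d e r) \<subseteq> Rspan R x y (Ttilde c d) \<and>
    strongly_nicely_essential (Rspan R x y (Tset c d e r)) (Rspan R x y (Ttilde c d)) \<and>
    special_with R x y (Rspan R x y (Ttilde c d)) (\<lambda>m. x ^ (c * m))
      (\<lambda>m. Rspan R x y {(n, k). k = 0 \<and> d dvd n}) (\<lambda>m. alpha R x y p e ^^ m) \<and>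
    special_subext R x y (Rspan R x y (Ttilde c d))"
proof -
  have "(of_nat p :: 'a) ^ (r + 1) = 0"
    using of_nat_CHAR[where 'a = 'a] assms(7) by (simp add: of_nat_power)
  then interpret ore_char R x y p e r
    using assms(2,8) by unfold_locales
  have r: "r \<ge> 1"
    using assms(3) by simp
  note facts = subring_A[OF assms(4,5,6) r] subring_A_tilde[OF assms(4,5,6) r]
    A_subset_A_tilde[OF assms(4,5,6) r] strongly_nicely_essential_A[OF assms(4,5,6) r]
    special_with_A_tilde[OF assms(4,5,6) r]
  then show ?thesis
    unfolding special_subext_def by blast
qed

end
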